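(* Let $A\in\mathrm{GL}_2(\mathbb{R})^k$ and let $A_\star\in\mathrm{SL}_2(\mathbb{R})^k$ be given by $(A_\star)_j=|\det A_j|^{-1/2}A_j$. If $A_\star$ satisfies a uniform LDT estimate in $\mathrm{SL}_2(\mathbb{R})^k$ (either of uniform exponential or of uniform sub-exponential type), then $A$ satisfies an LDT estimate of the same type, uniform in $\mathrm{GL}_2(\mathbb{R})^k$. Moreover, if the Lyapunov exponent $L:\mathrm{SL}_2(\mathbb{R})^k\to\mathbb{R}$ has a certain (at most Lipschitz) modulus of continuity near $A_\star$, then $L^+:\mathrm{GL}_2(\mathbb{R})^k\to\mathbb{R}$ has the same modulus of continuity near $A$.
   Context: $\Sigma=\{1,\dots,k\}$, $p$ a probability vector with positive entries, $X=\Sigma^{\mathbb{Z}}$, $\mathbb{P}=p^{\mathbb{Z}}$, $T$ the shift. A cocycle $B=(B_1,\dots,B_k)$ acts by $B(x)=B_{x_0}$ with iterates $B^{(n)}(x)=B_{x_{n-1}}\cdots B_{x_0}$; $d(A,B)=\max_j\|A_j-B_j\|$; $L^+(B)$ is the a.s. limit of $\frac1n\log\|B^{(n)}(x)\|$, and for $\mathrm{SL}_2$-valued cocycles $L(B):=L^+(B)$. Here $\mathrm{SL}_2(\mathbb{R})$ denotes matrices with determinant $\pm1$. A uniform exponential LDT estimate for $A$ (in a given space of cocycles) means: there are $\delta,c>0$ and for every small $\varepsilon>0$ some $\bar n$ with $\mathbb{P}[|\frac1n\log\|B^{(n)}\|-L^+(B)|>\varepsilon]<e^{-c\varepsilon^2n}$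 for all cocycles $B$ in that space with $d(B,A)<\delta$ and all $n\ge\bar n$. A uniform sub-exponential LDT estimate means: there are $\delta>0$, $\bar n$, $a,b>0$ with $\mathbb{P}[|\frac1n\log\|B^{(n)}\|-L^+(B)|>n^{-a}]<e^{-n^b}$ for all such $B$ with $d(B,A)<\delta$ and $n\ge\bar n$. A modulus of continuity near a point means a bound $|L(B_1)-L(B_2)|\le \omega(d(B_1,B_2))$ on a neighborhood, for a nondecreasing function $\omega$ with $\omega(t)\gtrsim t$ (at most Lipschitz). *)

theory Defs
  imports "HOL-Probability.Probability"
begin

text \<open>Alphabet Sigma is a finite type 'a (k = CARD('a)); the probability vector is a
  pmf p on 'a with full support (positive entries).\<close>

type_synonym mat2 = "real^2^2"

definition mnorm :: "mat2 \<Rightarrow> real" where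
  "mnorm M = onorm (\<lambda>v. M *v v)"

definition bernoulli :: "'a pmf \<Rightarrow> (int \<Rightarrow> 'a) measure" where
  "bernoulli p = PiM UNIV (\<lambda>_::int. measure_pmf p)"

fun coc_iter :: "('a \<Rightarrow> mat2) \<Rightarrow> nat \<Rightarrow> (int \<Rightarrow> 'a) \<Rightarrow> mat2" where
  "coc_iter B 0 x = mat 1"
| "coc_iter B (Suc n) x = B (x (int n)) ** coc_iter B n x"

definition coc_dist :: "('a::finite \<Rightarrow> mat2) \<Rightarrow> ('a \<Rightarrow> mat2) \<Rightarrow> real" where
  "coc_dist A B = Max (range (\<lambda>j. mnorm (A j - B j)))"

definition Lplus :: "'a pmf \<Rightarrow> ('a \<Rightarrow> mat2) \<Rightarrow> real" where
  "Lplus p B = (THE L. AE x in bernoulli p.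
       (\<lambda>n. ln (mnorm (coc_iter B n x)) / real n) \<longlonglongrightarrow> L)"

definition GL2 :: "('a \<Rightarrow> mat2) set" where
  "GL2 = {B. \<forall>j. det (B j) \<noteq> 0}"

text \<open>SL_2 in the paper's sense: determinant +-1.\<close>
definition SL2 :: "('a \<Rightarrow> mat2) set" where
  "SL2 = {B. \<forall>j. \<bar>det (B j)\<bar> = 1}"

definition normalize_coc :: "('a \<Rightarrow> mat2) \<Rightarrow> ('a \<Rightarrow> mat2)" where
  "normalize_coc A = (\<lambda>j. (1 / sqrt \<bar>det (A j)\<bar>) *\<^sub>R A j)"

definition uniform_exp_LDT :: "'a::finite pmf \<Rightarrow> ('a \<Rightarrow> mat2) set \<Rightarrow> ('a \<Rightarrow> mat2) \<Rightarrow> bool" where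
  "uniform_exp_LDT p S A \<longleftrightarrow>
    (\<exists>\<delta>>0. \<exists>c>0. \<exists>\<epsilon>0>0. \<forall>\<epsilon>. 0 < \<epsilon> \<and> \<epsilon> < \<epsilon>0 \<longrightarrow>
      (\<exists>nbar. \<forall>B\<in>S. coc_dist B A < \<delta> \<longrightarrow> (\<forall>n\<ge>nbar.
         measure (bernoulli p) {x \<in> space (bernoulli p).
             \<bar>ln (mnorm (coc_iter B n x)) / real n - Lplus p B\<bar> > \<epsilon>}
           < exp (- c * \<epsilon>\<^sup>2 * real n))))"

definition uniform_subexp_LDT :: "'a::finite pmf \<Rightarrow> ('a \<Rightarrow> mat2) set \<Rightarrow> ('a \<Rightarrow> mat2) \<Rightarrow> bool" where
  "uniform_subexp_LDT p S A \<longleftrightarrow>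
    (\<exists>\<delta>>0. \<exists>nbar. \<exists>a>0. \<exists>b>0. \<forall>B\<in>S. coc_dist B A < \<delta> \<longrightarrow> (\<forall>n\<ge>nbar.
         measure (bernoulli p) {x \<in> space (bernoulli p).
             \<bar>ln (mnorm (coc_iter B n x)) / real n - Lplus p B\<bar> > real n powr (- a)}
           < exp (- (real n powr b))))"

text \<open>Admissible moduli: nondecreasing, at most Lipschitz (omega(t) >~ t near 0).\<close>
definition admissible_modulus :: "(real \<Rightarrow> real) \<Rightarrow> bool" where
  "admissible_modulus \<omega> \<longleftrightarrow> mono_on {0..} \<omega> \<and>
     (\<exists>c>0. \<exists>t0>0. \<forall>t. 0 \<le> t \<and> t \<le> t0 \<longrightarrow> c * t \<le> \<omega> t)"

definition has_modulus_near ::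
  "(('a::finite \<Rightarrow> mat2) \<Rightarrow> real) \<Rightarrow> ('a \<Rightarrow> mat2) set \<Rightarrow> (real \<Rightarrow> real) \<Rightarrow> ('a \<Rightarrow> mat2) \<Rightarrow> bool" where
  "has_modulus_near F S \<omega> A \<longleftrightarrow>
    (\<exists>\<delta>>0. \<exists>C>0. \<forall>B1\<in>S. \<forall>B2\<in>S. coc_dist B1 A < \<delta> \<longrightarrow> coc_dist B2 A < \<delta> \<longrightarrow>
       \<bar>F B1 - F B2\<bar> \<le> C * \<omega> (C * coc_dist B1 B2))"

end

theory Submission
  imports Defs "HOL-Real_Asymp.Real_Asymp"
begin

(* Write B = s B' with s_j = sqrt |det B_j| and B' = normalize_coc B taking values in SL_2.  Then
     ln ||B^(n)(x)|| = ln ||B'^(n)(x)|| + sum_{i<n} ln s_{x_i},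
   and the last sum has i.i.d. bounded terms.  Hence L^+(B) = L(B') + E ln s; a large deviation for B
   is a large deviation for B' or for the i.i.d. average, the latter being exponentially unlikely by
   Hoeffding's inequality; and near A both B |-> B' and B |-> E ln s are Lipschitz.  As L^+ is defined
   as an almost sure limit, one also needs that this limit exists for every GL_2 cocycle
   (Furstenberg-Kesten).  It follows from Kingman's subadditive ergodic theorem, which rests on
   Kolmogorov's zero-one law and on the strong law of large numbers for functions of finitely many
   coordinates, itself a consequence of Hoeffding's inequality and Borel-Cantelli. *)

lemma (in prob_space) AE_tendsto_of_summable_deviations:
  fixes X :: "nat \<Rightarrow> 'a \<Rightarrow> real"
  assumes [measurable]: "\<And>n. X n \<in> borel_measurable M"
    and summable: "\<And>e. e > 0 \<Longrightarrow> summable (\<lambda>n. prob {x \<in> space M. e \<le> \<bar>X n x - c\<bar>})"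
  shows "AE x in M. (\<lambda>n. X n x) \<longlonglongrightarrow> c"
proof -
  have "AE x in M. eventually (\<lambda>n. \<bar>X n x - c\<bar> < 1 / Suc q) sequentially" for q :: nat
  proof -
    have "AE x in M. eventually (\<lambda>n. x \<in> space M - {x \<in> space M. 1 / Suc q \<le> \<bar>X n x - c\<bar>}) sequentially"
      by (rule borel_cantelli_AE1) (auto intro: summable simp: emeasure_eq_measure)
    then show ?thesis
      by (auto elim!: eventually_mono)
  qed
  then have "AE x in M. \<forall>q::nat. eventually (\<lambda>n. \<bar>X n x - c\<bar> < 1 / Suc q) sequentially"
    by (simp add: AE_all_countable)
  then show ?thesis
  proof (rule eventually_mono)
    fix x assume close: "\<forall>q::nat. eventually (\<lambda>n. \<bar>X n x - c\<bar> < 1 / Suc q) sequentially"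
    show "(\<lambda>n. X n x) \<longlonglongrightarrow> c"
    proof (rule tendstoI)
      fix e :: real assume "e > 0"
      then obtain q where "inverse (real (Suc q)) < e"
        using reals_Archimedean by blast
      with close[rule_format, of q] show "eventually (\<lambda>n. dist (X n x) c < e) sequentially"
        by (auto elim!: eventually_mono simp: dist_real_def inverse_eq_divide)
    qed
  qed
qed

lemma tendsto_round_down_ratio:
  assumes m: "0 < m"
  shows "(\<lambda>N. real (N div m * m) / real N) \<longlonglongrightarrow> 1"
proof (rule tendsto_sandwich)
  have K: "N div m * m \<le> N" "N < N div m * m + m" for N
    using div_mult_mod_eq[of N m] mod_less_divisor[OF m, of N] by linarith+
  show "eventually (\<lambda>N. 1 - real m / real N \<le> real (N div m * m) / real N) sequentially"
    using eventually_gt_at_top[of 0]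
  proof eventually_elim
    case (elim N)
    have "real N < real (N div m * m) + real m"
      using K(2)[of N] by (metis of_nat_add of_nat_less_iff)
    then have "real N - real m \<le> real (N div m * m)"
      by linarith
    then have "(real N - real m) / real N \<le> real (N div m * m) / real N"
      by (rule divide_right_mono) simp
    then show ?case
      using elim by (simp add: diff_divide_distrib)
  qed
  show "eventually (\<lambda>N. real (N div m * m) / real N \<le> 1) sequentially"
  proof (intro always_eventually allI)
    fix N
    have "real (N div m * m) \<le> real N"
      using K(1)[of N] by (simp only: of_nat_le_iff)
    then show "real (N div m * m) / real N \<le> 1"
      by (cases "N = 0") (simp_all del: of_nat_mult)
  qed
qed (real_asymp, simp)

lemma averages_tendsto_of_block_averages:
  fixes a :: "nat \<Rightarrow> real"
  assumes m: "0 < m" and blocks: "(\<lambda>K. (\<Sum>j<K * m. a j) / real (K * m)) \<longlonglongrightarrow> \<mu>"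
    and bound: "\<And>j. \<bar>a j\<bar> \<le> H"
  shows "(\<lambda>N. (\<Sum>j<N. a j) / real N) \<longlonglongrightarrow> \<mu>"
proof -
  define K where "K N = N div m * m" for N
  have K: "K N \<le> N" "N < K N + m" for N
    using div_mult_mod_eq[of N m] mod_less_divisor[OF m, of N] unfolding K_def by linarith+
  have "(\<lambda>N. (\<Sum>j<K N. a j) / real (K N)) \<longlonglongrightarrow> \<mu>"
    using filterlim_compose[OF blocks filterlim_at_top_div_const_nat[OF m]] by (simp add: K_def)
  moreover have "(\<lambda>N. real (K N) / real N) \<longlonglongrightarrow> 1"
    unfolding K_def by (rule tendsto_round_down_ratio[OF m])
  moreover have "(\<lambda>N. (\<Sum>j\<in>{K N..<N}. a j) / real N) \<longlonglongrightarrow> 0"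
  proof (rule Lim_null_comparison)
    have "\<bar>\<Sum>j\<in>{K N..<N}. a j\<bar> \<le> real m * H" for N
    proof -
      have "\<bar>\<Sum>j\<in>{K N..<N}. a j\<bar> \<le> real (card {K N..<N}) * H"
        using bound by (intro order_trans[OF sum_abs sum_bounded_above]) auto
      also have "\<dots> \<le> real m * H"
        using K[of N] bound[of 0] by (intro mult_right_mono) auto
      finally show ?thesis .
    qed
    then show "eventually (\<lambda>N. norm ((\<Sum>j\<in>{K N..<N}. a j) / real N) \<le> real m * H / real N) sequentially"
      by (auto simp: abs_divide divide_right_mono)
  qed (rule lim_const_over_n)
  ultimately have "(\<lambda>N. (\<Sum>j<K N. a j) / real (K N) * (real (K N) / real N)
      + (\<Sum>j\<in>{K N..<N}. a j) / real N) \<longlonglongrightarrow> \<mu> * 1 + 0"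
    by (intro tendsto_intros)
  moreover have "eventually (\<lambda>N. (\<Sum>j<K N. a j) / real (K N) * (real (K N) / real N)
      + (\<Sum>j\<in>{K N..<N}. a j) / real N = (\<Sum>j<N. a j) / real N) sequentially"
    using eventually_ge_at_top[of m]
  proof eventually_elim
    case (elim N)
    then have "K N > 0"
      using K[of N] by linarith
    moreover have "(\<Sum>j<N. a j) = (\<Sum>j<K N. a j) + (\<Sum>j\<in>{K N..<N}. a j)"
      using K(1)[of N] by (simp add: lessThan_atLeast0 sum.atLeastLessThan_concat)
    ultimately show ?case
      by (simp add: add_divide_distrib)
  qed
  ultimately show ?thesis
    by (simp add: tendsto_cong)
qed

section \<open>The Bernoulli shift\<close>

definition shift :: "nat \<Rightarrow> (int \<Rightarrow> 'a) \<Rightarrow> (int \<Rightarrow> 'a)" where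
  "shift k x = (\<lambda>i. x (i + int k))"

lemma shift_apply [simp]: "shift k x i = x (i + int k)"
  by (simp add: shift_def)

lemma shift_0 [simp]: "shift 0 x = x"
  by (simp add: shift_def)

lemma shift_shift [simp]: "shift n (shift m x) = shift (m + n) x"
  by (simp add: shift_def algebra_simps)

lemma measurable_from_finite_PiM_pmf:
  fixes q :: "'a::finite pmf"
  assumes "finite J" and "\<And>w. G w \<in> space N"
  shows "G \<in> measurable (PiM J (\<lambda>_. measure_pmf q)) N"
proof -
  have "sets (PiM J (\<lambda>_. measure_pmf q)) = sets (PiM J (\<lambda>_. count_space (UNIV::'a set)))"
    by (intro sets_PiM_cong) auto
  also have "PiM J (\<lambda>_. count_space (UNIV::'a set)) = count_space (PiE J (\<lambda>_. UNIV))"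
    using assms by (intro count_space_PiM_finite) auto
  finally have "measurable (PiM J (\<lambda>_. measure_pmf q)) N = measurable (count_space (PiE J (\<lambda>_. UNIV))) N"
    by (intro measurable_cong_sets) auto
  then show ?thesis
    using assms(2) by simp
qed

locale bernoulli_shift =
  fixes p :: "'a::finite pmf"
begin

abbreviation "\<Omega> \<equiv> bernoulli p"

sublocale P: product_prob_space "\<lambda>_::int. measure_pmf p" UNIV
  by unfold_locales

sublocale O: prob_space \<Omega>
  unfolding bernoulli_def by (rule P.prob_space_axioms)

lemma space_bernoulli [simp]: "space \<Omega> = UNIV"
  by (simp add: bernoulli_def space_PiM)

lemma measurable_cylinder_function:
  assumes "finite J" and dep: "\<And>x y. (\<And>i. i \<in> J \<Longrightarrow> x i = y i) \<Longrightarrow> g x = g y"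
    and sp: "\<And>x. g x \<in> space N"
  shows "g \<in> measurable \<Omega> N"
proof -
  define G where "G w = g (\<lambda>i. if i \<in> J then w i else undefined)" for w
  have eq: "g = (\<lambda>x. G (restrict x J))"
    by (rule ext) (auto simp: G_def intro!: dep)
  have "(\<lambda>x. restrict x J) \<in> measurable \<Omega> (PiM J (\<lambda>_. measure_pmf p))"
    unfolding bernoulli_def by (rule measurable_restrict_subset) auto
  moreover have "G \<in> measurable (PiM J (\<lambda>_. measure_pmf p)) N"
    by (rule measurable_from_finite_PiM_pmf[OF assms(1)]) (simp add: G_def sp)
  ultimately show ?thesis
    unfolding eq by (rule measurable_compose)
qed

lemma sets_cylinder:
  assumes "finite J" and "\<And>x y. (\<And>i. i \<in> J \<Longrightarrow> x i = y i) \<Longrightarrow> P x \<longleftrightarrow> P y"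
  shows "{x. P x} \<in> sets \<Omega>"
proof -
  have "P \<in> measurable \<Omega> (count_space UNIV)"
    using measurable_cylinder_function[OF assms, where N="count_space UNIV"] by simp
  then have "P -` {True} \<inter> space \<Omega> \<in> sets \<Omega>"
    by (rule measurable_sets) auto
  then show ?thesis
    by (simp add: vimage_def)
qed

lemma measurable_shift [measurable]: "shift k \<in> measurable \<Omega> \<Omega>"
  unfolding bernoulli_def shift_def by (rule measurable_PiM_single') auto

lemma distr_shift: "distr \<Omega> \<Omega> (shift k) = \<Omega>"
proof -
  have "distr (PiM UNIV (\<lambda>_::int. measure_pmf p)) (PiM UNIV (\<lambda>_::int. measure_pmf p))
      (\<lambda>x. \<lambda>i\<in>UNIV. x (i + int k)) = PiM UNIV (\<lambda>_::int. measure_pmf p)"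
    using distr_PiM_reindex[of UNIV "\<lambda>_::int. measure_pmf p" "\<lambda>i. i + int k" UNIV]
    by (auto simp: inj_on_def prob_space_measure_pmf)
  then show ?thesis
    unfolding bernoulli_def shift_def restrict_def by simp
qed

lemma distr_comp_shift:
  assumes "h \<in> borel_measurable \<Omega>"
  shows "distr \<Omega> borel (\<lambda>x. h (shift k x)) = distr \<Omega> borel h"
  using distr_distr[OF assms measurable_shift, of k] by (simp add: comp_def distr_shift)

lemma indep_vars_coordinates: "O.indep_vars (\<lambda>_. measure_pmf p) (\<lambda>i x. x i) UNIV"
proof -
  have rv: "\<And>i. O.random_variable (measure_pmf p) (\<lambda>x. x i)"
    unfolding bernoulli_def by (rule measurable_component_singleton) simp
  have "distr \<Omega> (PiM UNIV (\<lambda>_. measure_pmf p)) (\<lambda>x. \<lambda>i\<in>UNIV. x i)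
      = PiM UNIV (\<lambda>i. distr \<Omega> (measure_pmf p) (\<lambda>x. x i))"
    unfolding bernoulli_def restrict_def using P.PiM_component[of _] by simp
  then show ?thesis
    by (subst O.indep_vars_iff_distr_eq_PiM[OF _ rv]) (simp_all add: bernoulli_def)
qed

lemma indep_vars_cylinder_functions:
  fixes g :: "'i \<Rightarrow> (int \<Rightarrow> 'a) \<Rightarrow> 'b" and K :: "'i \<Rightarrow> int set"
  assumes fin: "\<And>j. j \<in> L \<Longrightarrow> finite (K j)" and disj: "disjoint_family_on K L"
    and dep: "\<And>j x y. j \<in> L \<Longrightarrow> (\<And>i. i \<in> K j \<Longrightarrow> x i = y i) \<Longrightarrow> g j x = g j y"
    and sp: "\<And>j x. j \<in> L \<Longrightarrow> g j x \<in> space (N j)"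
  shows "O.indep_vars N g L"
proof -
  define G where "G j w = g j (\<lambda>i. if i \<in> K j then w i else undefined)" for j w
  have "O.indep_vars (\<lambda>j. PiM (K j) (\<lambda>_. measure_pmf p)) (\<lambda>j x. restrict x (K j)) L"
    by (rule O.indep_vars_restrict[OF indep_vars_coordinates _ disj]) auto
  then have "O.indep_vars N (\<lambda>j x. G j (restrict x (K j))) L"
    by (rule O.indep_vars_compose2) (auto simp: G_def intro!: measurable_from_finite_PiM_pmf fin sp)
  moreover have "\<And>j. j \<in> L \<Longrightarrow> (\<lambda>x. G j (restrict x (K j))) = g j"
    by (auto simp: G_def intro!: ext dep)
  ultimately show ?thesis
    by (subst O.indep_vars_cong[OF refl _ refl, where Y="\<lambda>j x. G j (restrict x (K j))"]) auto
qed

end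

section \<open>The ergodic theorem for cylinder functions\<close>

context bernoulli_shift
begin

text \<open>The samples \<open>h \<circ> shift (k m + r)\<close> depend on the disjoint blocks of coordinates
  \<open>[k m + r, k m + r + m)\<close>, so they are i.i.d.\ and Hoeffding's inequality applies; the range
  \<open>[-H-1, H+1]\<close> rather than \<open>[-H, H]\<close> keeps it nondegenerate when \<open>H = 0\<close>.\<close>

lemma prob_shifted_block_average_deviation:
  fixes h :: "(int \<Rightarrow> 'a) \<Rightarrow> real"
  assumes m: "0 < m" and K: "0 < K" and \<epsilon>: "0 \<le> \<epsilon>"
    and dep: "\<And>x y. (\<And>i. 0 \<le> i \<Longrightarrow> i < int m \<Longrightarrow> x i = y i) \<Longrightarrow> h x = h y"
    and bound: "\<And>x. \<bar>h x\<bar> \<le> H"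
  shows "O.prob {x \<in> space \<Omega>. \<epsilon> \<le> \<bar>(\<Sum>k<K. h (shift (k * m + r) x)) / real K - O.expectation h\<bar>}
           \<le> 2 * exp (- (real K * \<epsilon>\<^sup>2 / (2 * (H + 1)\<^sup>2)))"
proof -
  define block where "block k = {int (k * m + r)..<int (k * m + r) + int m}" for k
  have h_meas [measurable]: "h \<in> borel_measurable \<Omega>"
    by (rule measurable_cylinder_function[of "{0..<int m}"]) (auto intro: dep)
  have disj: "disjoint_family_on block {..<K}"
    unfolding disjoint_family_on_def
  proof (intro ballI impI)
    fix a b :: nat assume "a \<noteq> b"
    show "block a \<inter> block b = {}"
    proof (rule ccontr)
      assume "block a \<inter> block b \<noteq> {}"
      then have "int (a * m) < int (Suc b * m)" "int (b * m) < int (Suc a * m)"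
        by (auto simp: block_def)
      then show False
        using \<open>a \<noteq> b\<close> by (simp only: of_nat_less_iff mult_less_cancel2) linarith
    qed
  qed
  interpret Hoeffding_ineq_iid \<Omega> "{..<K}" "\<lambda>k x. h (shift (k * m + r) x)" h "-H-1" "H+1"
    "O.expectation h"
  proof unfold_locales
    show "O.indep_vars (\<lambda>_. borel) (\<lambda>k x. h (shift (k * m + r) x)) {..<K}"
      by (rule indep_vars_cylinder_functions[where K=block, OF _ disj])
        (auto simp: block_def intro!: dep)
    show "AE x in \<Omega>. h x \<in> {- H - 1..H + 1}"
    proof (intro AE_I2)
      fix x
      show "h x \<in> {- H - 1..H + 1}"
        using bound[of x] by (simp add: abs_le_iff)
    qed
  qed (auto simp: distr_comp_shift)
  have "(H + 1 - (- H - 1))\<^sup>2 = 4 * (H + 1)\<^sup>2"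
    by (simp add: power2_eq_square algebra_simps)
  moreover have "- H - 1 < H + 1"
    using bound[of undefined] by linarith
  moreover have "{..<K} \<noteq> {}"
    using K by auto
  ultimately show ?thesis
    using Hoeffding_ineq_abs_ge'[OF \<epsilon>] by (simp add: field_simps)
qed

lemma AE_shifted_block_average_tendsto:
  fixes h :: "(int \<Rightarrow> 'a) \<Rightarrow> real"
  assumes m: "0 < m"
    and dep: "\<And>x y. (\<And>i. 0 \<le> i \<Longrightarrow> i < int m \<Longrightarrow> x i = y i) \<Longrightarrow> h x = h y"
    and bound: "\<And>x. \<bar>h x\<bar> \<le> H"
  shows "AE x in \<Omega>. (\<lambda>K. (\<Sum>k<K. h (shift (k * m + r) x)) / real K) \<longlonglongrightarrow> O.expectation h"
proof -
  have [measurable]: "h \<in> borel_measurable \<Omega>"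
    by (rule measurable_cylinder_function[of "{0..<int m}"]) (auto intro: dep)
  have "AE x in \<Omega>. (\<lambda>K. (\<Sum>k<Suc K. h (shift (k * m + r) x)) / real (Suc K)) \<longlonglongrightarrow> O.expectation h"
  proof (rule O.AE_tendsto_of_summable_deviations)
    fix e :: real assume "e > 0"
    define c where "c = e\<^sup>2 / (2 * (H + 1)\<^sup>2)"
    have "c > 0"
      using \<open>e > 0\<close> bound[of undefined] by (simp add: c_def)
    have deviation: "O.prob {x \<in> space \<Omega>. e \<le> \<bar>(\<Sum>k<Suc K. h (shift (k * m + r) x)) / real (Suc K)
        - O.expectation h\<bar>} \<le> 2 * exp (- c) ^ Suc K" for K
    proof -
      have "O.prob {x \<in> space \<Omega>. e \<le> \<bar>(\<Sum>k<Suc K. h (shift (k * m + r) x)) / real (Suc K)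
          - O.expectation h\<bar>} \<le> 2 * exp (- (real (Suc K) * e\<^sup>2 / (2 * (H + 1)\<^sup>2)))"
        by (rule prob_shifted_block_average_deviation[OF m _ _ dep bound]) (use \<open>e > 0\<close> in auto)
      also have "- (real (Suc K) * e\<^sup>2 / (2 * (H + 1)\<^sup>2)) = real (Suc K) * - c"
        by (simp add: c_def)
      also have "exp (real (Suc K) * - c) = exp (- c) ^ Suc K"
        by (rule exp_of_nat_mult)
      finally show ?thesis .
    qed
    have "summable (\<lambda>K. 2 * exp (- c) ^ Suc K)"
      using \<open>c > 0\<close> by (intro summable_mult summable_Suc_iff[THEN iffD2] summable_geometric) auto
    then show "summable (\<lambda>K. O.prob {x \<in> space \<Omega>.
        e \<le> \<bar>(\<Sum>k<Suc K. h (shift (k * m + r) x)) / real (Suc K) - O.expectation h\<bar>})"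
      by (rule summable_comparison_test')
        (simp only: real_norm_def abs_of_nonneg[OF measure_nonneg] deviation)
  qed measurable
  then show ?thesis
    by (rule eventually_mono) (rule LIMSEQ_imp_Suc)
qed

theorem AE_ergodic_average_cylinder_function:
  fixes h :: "(int \<Rightarrow> 'a) \<Rightarrow> real"
  assumes m: "0 < m"
    and dep: "\<And>x y. (\<And>i. 0 \<le> i \<Longrightarrow> i < int m \<Longrightarrow> x i = y i) \<Longrightarrow> h x = h y"
    and bound: "\<And>x. \<bar>h x\<bar> \<le> H"
  shows "AE x in \<Omega>. (\<lambda>N. (\<Sum>j<N. h (shift j x)) / real N) \<longlonglongrightarrow> O.expectation h"
proof -
  have "AE x in \<Omega>. \<forall>r\<in>{..<m}. (\<lambda>K. (\<Sum>k<K. h (shift (k * m + r) x)) / real K) \<longlonglongrightarrow> O.expectation h"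
    by (subst AE_finite_all) (auto intro: AE_shifted_block_average_tendsto[OF m dep bound])
  then show ?thesis
  proof (rule eventually_mono)
    fix x
    assume "\<forall>r\<in>{..<m}. (\<lambda>K. (\<Sum>k<K. h (shift (k * m + r) x)) / real K) \<longlonglongrightarrow> O.expectation h"
    then have "(\<lambda>K. (\<Sum>r<m. (\<Sum>k<K. h (shift (k * m + r) x)) / real K) / real m)
        \<longlonglongrightarrow> (\<Sum>r<m. O.expectation h) / real m"
      using m by (intro tendsto_intros) auto
    moreover have "(\<Sum>r<m. (\<Sum>k<K. h (shift (k * m + r) x)) / real K) / real m
        = (\<Sum>j<K * m. h (shift j x)) / real (K * m)" for K
    proof -
      have "(\<Sum>r<m. \<Sum>k<K. h (shift (k * m + r) x)) = (\<Sum>k<K. \<Sum>j\<in>{k * m..<k * m + m}. h (shift j x))"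
        by (subst sum.swap) (simp add: sum.shift_bounds_nat_ivl[of _ 0 _ m, simplified] atLeast0LessThan add.commute)
      also have "\<dots> = (\<Sum>j<K * m. h (shift j x))"
        by (rule sum.nat_group)
      finally show ?thesis
        by (simp add: sum_divide_distrib[symmetric])
    qed
    ultimately have "(\<lambda>K. (\<Sum>j<K * m. h (shift j x)) / real (K * m)) \<longlonglongrightarrow> O.expectation h"
      using m by simp
    then show "(\<lambda>N. (\<Sum>j<N. h (shift j x)) / real N) \<longlonglongrightarrow> O.expectation h"
      by (rule averages_tendsto_of_block_averages[OF m _ bound])
  qed
qed

end

section \<open>Tail events of the Bernoulli shift\<close>

context bernoulli_shift
begin

definition coordinate_events :: "nat \<Rightarrow> (int \<Rightarrow> 'a) set set" where
  "coordinate_events i =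
     sigma_sets (space \<Omega>) {(\<lambda>x. x (int i)) -` S \<inter> space \<Omega> | S. S \<in> sets (measure_pmf p)}"

lemma indep_sets_coordinate_events: "O.indep_sets coordinate_events UNIV"
proof -
  have "O.indep_vars (\<lambda>_. measure_pmf p) (\<lambda>i x. x (int i)) UNIV"
    by (rule indep_vars_cylinder_functions[where K="\<lambda>i. {int i}"]) (auto simp: disjoint_family_on_def)
  then show ?thesis
    unfolding O.indep_vars_def coordinate_events_def by simp
qed

lemma sigma_algebra_coordinate_events: "sigma_algebra (space \<Omega>) (coordinate_events i)"
  unfolding coordinate_events_def by (rule sigma_algebra_sigma_sets) auto

lemma cylinder_in_future_events:
  assumes fin: "finite J" and J: "\<And>j. j \<in> J \<Longrightarrow> int n \<le> j"
    and dep: "\<And>x y. (\<And>i. i \<in> J \<Longrightarrow> x i = y i) \<Longrightarrow> x \<in> S \<longleftrightarrow> y \<in> S"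
  shows "S \<in> sigma_sets (space \<Omega>) (\<Union> (coordinate_events ` {n..}))"
proof -
  let ?\<F> = "sigma_sets (space \<Omega>) (\<Union> (coordinate_events ` {n..}))"
  interpret \<F>: sigma_algebra "space \<Omega>" ?\<F>
    by (rule sigma_algebra_sigma_sets) (auto simp: coordinate_events_def)
  have coordinate_value: "{x. x j = a} \<in> ?\<F>" if "j \<in> J" for j a
  proof -
    have j: "j = int (nat j)" "nat j \<ge> n"
      using J[OF that] by auto
    have "{x. x j = a} = (\<lambda>x. x (int (nat j))) -` {a} \<inter> space \<Omega>"
      using j by auto
    also have "\<dots> \<in> coordinate_events (nat j)"
      unfolding coordinate_events_def by (intro sigma_sets.Basic) auto
    finally show ?thesis
      using j by (intro sigma_sets.Basic) auto
  qed
  define W where "W = (\<lambda>x. restrict x J) ` S"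
  have "finite W"
    using fin by (rule finite_subset[OF _ finite_PiE, rotated]) (auto simp: W_def)
  have "S = (\<Union>w\<in>W. \<Inter>j\<in>J. {x. x j = w j})"
  proof (intro equalityI subsetI)
    fix x assume "x \<in> (\<Union>w\<in>W. \<Inter>j\<in>J. {x. x j = w j})"
    then obtain y where "y \<in> S" "\<And>j. j \<in> J \<Longrightarrow> x j = y j"
      unfolding W_def by auto
    then show "x \<in> S"
      using dep[of x y] by blast
  qed (auto simp: W_def)
  also have "\<dots> \<in> ?\<F>"
  proof (rule \<F>.finite_UN[OF \<open>finite W\<close>])
    fix w
    show "(\<Inter>j\<in>J. {x. x j = w j}) \<in> ?\<F>"
    proof (cases "J = {}")
      case False
      then show ?thesis
        using fin coordinate_value by (intro \<F>.finite_INT) auto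
    qed (use \<F>.top in simp)
  qed
  finally show ?thesis .
qed

end

section \<open>Kingman's subadditive ergodic theorem\<close>

text \<open>Hypothesis and conclusion encode \<open>liminf (v n / n) \<le> q\<close> and \<open>liminf (u n / n) \<le> q\<close>.\<close>

lemma liminf_slope_le_transfer:
  fixes u v :: "nat \<Rightarrow> real" and g :: "nat \<Rightarrow> nat"
  assumes v: "\<forall>e::nat. \<forall>N. \<exists>n\<ge>N. v n < real n * (q + 1 / real (Suc e))"
    and uv: "\<And>n. u (g n) \<le> v n + C" and g: "\<And>n. \<bar>real (g n) - real n\<bar> \<le> 1"
  shows "\<forall>e::nat. \<forall>N. \<exists>n\<ge>N. u n < real n * (q + 1 / real (Suc e))"
proof (intro allI)
  fix e N :: nat
  define \<delta> where "\<delta> = 1 / real (Suc e)"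
  have \<delta>: "\<delta> > 0" "1 / real (Suc (2 * e + 1)) = \<delta> / 2"
    by (simp_all add: \<delta>_def field_simps)
  obtain T :: nat where T: "2 * (C + \<bar>q\<bar> + \<delta>) / \<delta> < real T"
    using reals_Archimedean2 by blast
  obtain n where n: "n \<ge> max (Suc N) T" "v n < real n * (q + \<delta> / 2)"
    using v \<delta>(2) by metis
  have "2 * (C + \<bar>q\<bar> + \<delta>) < real n * \<delta>"
    using T n(1) \<delta>(1) by (simp add: divide_less_eq) (smt (verit) mult_right_mono of_nat_mono)
  moreover have "\<bar>(real (g n) - real n) * (q + \<delta>)\<bar> \<le> \<bar>q\<bar> + \<delta>"
    using g[of n] \<delta>(1) by (simp add: abs_mult) (smt (verit) mult_left_le_one_le abs_ge_zero)
  moreover have "real (g n) * (q + \<delta>) = real n * q + real n * \<delta> + (real (g n) - real n) * (q + \<delta>)"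
    "real n * (q + \<delta> / 2) = real n * q + real n * \<delta> / 2"
    by (simp_all add: algebra_simps)
  ultimately have "u (g n) < real (g n) * (q + \<delta>)"
    using uv[of n] n(2) by (simp add: abs_le_iff) linarith
  moreover have "g n \<ge> N"
    using g[of n] n(1) by (simp add: abs_le_iff)
  ultimately show "\<exists>n\<ge>N. u n < real n * (q + 1 / real (Suc e))"
    unfolding \<delta>_def by blast
qed

text \<open>Cover \<open>[j, j + L)\<close> greedily: from a good point take a step of slope at most \<open>\<mu>\<close>,
  from a bad point a step of length one; the last incomplete step costs at most \<open>D M\<close>.\<close>

lemma subadditive_covering_bound:
  fixes G :: "nat \<Rightarrow> nat \<Rightarrow> real" and bad :: "nat \<Rightarrow> bool"
  assumes G_0: "\<And>j. G j 0 = 0"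
    and G_subadditive: "\<And>j n m. G j (n + m) \<le> G j n + G (j + n) m"
    and G_upper: "\<And>j n. G j n \<le> real n * C"
    and good: "\<And>j. \<not> bad j \<Longrightarrow> \<exists>n. 1 \<le> n \<and> n \<le> M \<and> G j n \<le> real n * \<mu>"
    and D: "C - \<mu> \<le> D" "0 \<le> D"
  shows "G j L \<le> real L * \<mu> + D * ((\<Sum>i\<in>{j..<j + L}. of_bool (bad i)) + real M)"
proof (induction L arbitrary: j rule: less_induct)
  case (less L)
  define bad_count where "bad_count j L = (\<Sum>i\<in>{j..<j + L}. of_bool (bad i) :: real)" for j L
  have bad_count_nonneg: "bad_count j L \<ge> 0" for j L
    unfolding bad_count_def by (intro sum_nonneg) auto
  have IH: "G j L' \<le> real L' * \<mu> + D * (bad_count j L' + real M)" if "L' < L" for L' j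
    using less that unfolding bad_count_def by blast
  have "G j L \<le> real L * \<mu> + D * (bad_count j L + real M)"
  proof (cases "L = 0")
    case True
    then show ?thesis
      using G_0 D(2) bad_count_nonneg[of j L] by simp
  next
    case False
    show ?thesis
    proof (cases "bad j")
      case True
      have "bad_count j L = 1 + bad_count (j + 1) (L - 1)"
        unfolding bad_count_def using \<open>L \<noteq> 0\<close> True
        by (simp add: sum.atLeast_Suc_lessThan del: sum_of_bool_eq)
      then have "D * (bad_count j L + real M) = D + D * (bad_count (j + 1) (L - 1) + real M)"
        by (simp add: algebra_simps)
      moreover have "G j L \<le> G j 1 + G (j + 1) (L - 1)"
        using G_subadditive[of j 1 "L - 1"] \<open>L \<noteq> 0\<close> by simp
      moreover have "G j 1 \<le> C"
        using G_upper[of j 1] by simp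
      moreover have "real (L - 1) * \<mu> = real L * \<mu> - \<mu>"
        using \<open>L \<noteq> 0\<close> by (simp add: of_nat_diff algebra_simps)
      ultimately show ?thesis
        using IH[of "L - 1" "j + 1"] \<open>L \<noteq> 0\<close> D(1) by linarith
    next
      case False
      then obtain n where n: "1 \<le> n" "n \<le> M" "G j n \<le> real n * \<mu>"
        using good by blast
      show ?thesis
      proof (cases "n \<le> L")
        case True
        have "G j L \<le> G j n + G (j + n) (L - n)"
          using G_subadditive[of j n "L - n"] True by simp
        moreover have "bad_count (j + n) (L - n) \<le> bad_count j L"
          unfolding bad_count_def using True by (intro sum_mono2) auto
        then have "D * (bad_count (j + n) (L - n) + real M) \<le> D * (bad_count j L + real M)"
          using D(2) by (intro mult_left_mono) auto
        moreover have "real n * \<mu> + real (L - n) * \<mu> = real L * \<mu>"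
          using True by (simp add: of_nat_diff algebra_simps)
        ultimately show ?thesis
          using IH[of "L - n" "j + n"] n(1,3) \<open>L \<noteq> 0\<close> by linarith
      next
        case False
        have "G j L \<le> real L * \<mu> + real L * (C - \<mu>)"
          using G_upper[of j L] by (simp add: algebra_simps)
        also have "\<dots> \<le> real L * \<mu> + real L * D"
          using D(1) by (intro add_left_mono mult_left_mono) auto
        also have "\<dots> \<le> real L * \<mu> + real M * D"
          using False n(2) D(2) by (intro add_left_mono mult_right_mono) auto
        moreover have "0 \<le> D * bad_count j L"
          using bad_count_nonneg[of j L] D(2) by simp
        ultimately show ?thesis
          by (simp add: algebra_simps)
      qed
    qed
  qed
  then show ?case
    by (simp add: bad_count_def)
qed

locale subadditive_process = bernoulli_shift p for p :: "'a::finite pmf" +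
  fixes F :: "nat \<Rightarrow> (int \<Rightarrow> 'a) \<Rightarrow> real" and C :: real
  assumes F_0: "\<And>x. F 0 x = 0"
    and F_subadditive: "\<And>n m x. F (n + m) x \<le> F n x + F m (shift n x)"
    and F_increment: "\<And>n x. \<bar>F (Suc n) x - F n (shift 1 x)\<bar> \<le> C"
    and F_cylinder: "\<And>n x y. (\<And>i. 0 \<le> i \<Longrightarrow> i < int n \<Longrightarrow> x i = y i) \<Longrightarrow> F n x = F n y"
begin

lemma C_nonneg: "C \<ge> 0"
  using F_increment[of 0 undefined] by (simp add: F_0)

lemma abs_F_le: "\<bar>F n x\<bar> \<le> real n * C"
proof (induction n arbitrary: x)
  case (Suc n)
  have "\<bar>F n (shift 1 x)\<bar> \<le> real n * C"
    by (rule Suc.IH)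
  moreover have "real (Suc n) * C = real n * C + C"
    by (simp add: algebra_simps)
  ultimately show ?case
    using F_increment[of n x] by linarith
qed (simp add: F_0)

text \<open>\<open>x \<in> slope_below q\<close> means \<open>liminf (F n x / n) \<le> q\<close>.\<close>

definition slope_below :: "real \<Rightarrow> (int \<Rightarrow> 'a) set" where
  "slope_below q = {x. \<forall>e::nat. \<forall>N. \<exists>n\<ge>N. F n x < real n * (q + 1 / real (Suc e))}"

lemma shift1_in_slope_below_iff: "shift 1 x \<in> slope_below q \<longleftrightarrow> x \<in> slope_below q"
proof
  assume "shift 1 x \<in> slope_below q"
  moreover have "F (Suc n) x \<le> F n (shift 1 x) + C" for n
    using F_increment[of n x] by linarith
  ultimately show "x \<in> slope_below q"
    unfolding slope_below_def mem_Collect_eq by (rule liminf_slope_le_transfer[where g=Suc]) auto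
next
  assume "x \<in> slope_below q"
  moreover have "F (n - 1) (shift 1 x) \<le> F n x + C" for n
    using F_increment[of "n - 1" x] C_nonneg by (cases n) (auto simp: F_0)
  moreover have "\<bar>real (n - 1) - real n\<bar> \<le> 1" for n
    by (cases n) auto
  ultimately show "shift 1 x \<in> slope_below q"
    unfolding slope_below_def mem_Collect_eq by (rule liminf_slope_le_transfer)
qed

lemma shift_in_slope_below_iff: "shift k x \<in> slope_below q \<longleftrightarrow> x \<in> slope_below q"
proof (induction k arbitrary: x)
  case (Suc k)
  have "shift (Suc k) x = shift 1 (shift k x)"
    by simp
  then show ?case
    using shift1_in_slope_below_iff[of "shift k x" q] Suc.IH[of x] by metis
qed simp

lemma slope_below_tail_event: "slope_below q \<in> O.tail_events coordinate_events"
  unfolding O.tail_events_def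
proof (intro InterI, safe)
  fix k
  let ?\<F> = "sigma_sets (space \<Omega>) (\<Union> (coordinate_events ` {k..}))"
  interpret \<F>: sigma_algebra "space \<Omega>" ?\<F>
    by (rule sigma_algebra_sigma_sets) (auto simp: coordinate_events_def)
  have UNIV_in: "UNIV \<in> ?\<F>"
    using \<F>.top by simp
  have future: "{x. F n (shift k x) < c} \<in> ?\<F>" for n c
  proof (rule cylinder_in_future_events[of "{int k..<int k + int n}"])
    fix x y :: "int \<Rightarrow> 'a" assume "\<And>i. i \<in> {int k..<int k + int n} \<Longrightarrow> x i = y i"
    then have "F n (shift k x) = F n (shift k y)"
      by (intro F_cylinder) auto
    then show "x \<in> {x. F n (shift k x) < c} \<longleftrightarrow> y \<in> {x. F n (shift k x) < c}"
      by simp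
  qed auto
  have "slope_below q = {x. shift k x \<in> slope_below q}"
    using shift_in_slope_below_iff by auto
  also have "\<dots> = (\<Inter>e. \<Inter>N. \<Union>n\<in>{N..}. {x. F n (shift k x) < real n * (q + 1 / real (Suc e))})"
    unfolding slope_below_def by auto
  also have "\<dots> \<in> ?\<F>"
    by (intro \<F>.countable_INT''[OF UNIV_in] \<F>.countable_UN'' future) auto
  finally show "slope_below q \<in> ?\<F>" .
qed

lemma slope_below_in_sets: "slope_below q \<in> sets \<Omega>"
  using O.tail_events_sets[of coordinate_events] indep_sets_coordinate_events slope_below_tail_event
  unfolding O.indep_sets_def by blast

lemma prob_slope_below_0_or_1: "O.prob (slope_below q) = 0 \<or> O.prob (slope_below q) = 1"
  by (rule O.kolmogorov_0_1_law[OF sigma_algebra_coordinate_events indep_sets_coordinate_events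
        slope_below_tail_event])

lemma slope_below_mono:
  assumes "q \<le> q'"
  shows "slope_below q \<subseteq> slope_below q'"
proof
  fix x assume x: "x \<in> slope_below q"
  show "x \<in> slope_below q'"
    unfolding slope_below_def mem_Collect_eq
  proof (intro allI)
    fix e N :: nat
    obtain n where "n \<ge> N" "F n x < real n * (q + 1 / real (Suc e))"
      using x unfolding slope_below_def by blast
    moreover have "real n * (q + 1 / real (Suc e)) \<le> real n * (q' + 1 / real (Suc e))"
      using assms by (intro mult_left_mono) auto
    ultimately show "\<exists>n\<ge>N. F n x < real n * (q' + 1 / real (Suc e))"
      by auto
  qed
qed

lemma slope_below_empty:
  assumes "q < - C"
  shows "slope_below q = {}"
proof -
  obtain e where e: "1 / real (Suc e) < - C - q"
    using reals_Archimedean[of "- C - q"] assms by (auto simp: inverse_eq_divide)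
  have below: "real n * (q + 1 / real (Suc e)) < F n x" if "n \<ge> 1" for n x
  proof -
    have "real n * (q + 1 / real (Suc e)) < real n * (- C)"
      using e that by (intro mult_strict_left_mono) auto
    also have "\<dots> \<le> F n x"
      using abs_F_le[of n x] by (simp add: abs_le_iff)
    finally show ?thesis .
  qed
  show ?thesis
  proof (intro equalityI subsetI)
    fix x assume "x \<in> slope_below q"
    then obtain n where "n \<ge> 1" "F n x < real n * (q + 1 / real (Suc e))"
      unfolding slope_below_def by blast
    with below show "x \<in> {}"
      by (meson not_less_iff_gr_or_eq)
  qed simp
qed

lemma slope_below_UNIV:
  assumes "C \<le> q"
  shows "slope_below q = UNIV"
proof -
  have above: "F n x < real n * (q + 1 / real (Suc e))" if "n \<ge> 1" for n x e
  proof -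
    have "0 < 1 / real (Suc e)"
      by simp
    then have "C < q + 1 / real (Suc e)"
      using assms by linarith
    have "F n x \<le> real n * C"
      using abs_F_le[of n x] by (simp add: abs_le_iff)
    also have "\<dots> < real n * (q + 1 / real (Suc e))"
      using \<open>C < q + 1 / real (Suc e)\<close> that by (intro mult_strict_left_mono) auto
    finally show ?thesis .
  qed
  have "x \<in> slope_below q" for x
    unfolding slope_below_def mem_Collect_eq
  proof (intro allI)
    fix e N :: nat
    show "\<exists>n\<ge>N. F n x < real n * (q + 1 / real (Suc e))"
      using above[of "max N 1" x e] by (intro exI[of _ "max N 1"]) auto
  qed
  then show ?thesis
    by auto
qed

definition kingman_limit :: real where
  "kingman_limit = Inf {q. O.prob (slope_below q) = 1}"

lemma kingman_limit_set:
  shows "{q. O.prob (slope_below q) = 1} \<noteq> {}" and "bdd_below {q. O.prob (slope_below q) = 1}"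
proof -
  show "{q. O.prob (slope_below q) = 1} \<noteq> {}"
    using slope_below_UNIV[of C] O.prob_space by (auto intro!: exI[of _ C])
  show "bdd_below {q. O.prob (slope_below q) = 1}"
    by (rule bdd_belowI[of _ "- C"]) (use slope_below_empty in \<open>force simp: not_le[symmetric]\<close>)
qed

lemma prob_slope_below_above_limit:
  assumes "kingman_limit < q"
  shows "O.prob (slope_below q) = 1"
proof -
  obtain q' where q': "O.prob (slope_below q') = 1" "q' < q"
    using assms unfolding kingman_limit_def cInf_less_iff[OF kingman_limit_set] by auto
  then have "O.prob (slope_below q') \<le> O.prob (slope_below q)"
    using slope_below_mono[of q' q] slope_below_in_sets by (intro O.finite_measure_mono) auto
  then show ?thesis
    using q' O.prob_le_1[of "slope_below q"] by simp
qed

lemma prob_slope_below_below_limit: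
  assumes "q < kingman_limit"
  shows "O.prob (slope_below q) = 0"
proof -
  have "O.prob (slope_below q) \<noteq> 1"
  proof
    assume "O.prob (slope_below q) = 1"
    then have "kingman_limit \<le> q"
      unfolding kingman_limit_def by (intro cInf_lower) (auto simp: kingman_limit_set)
    then show False
      using assms by simp
  qed
  then show ?thesis
    using prob_slope_below_0_or_1[of q] by auto
qed

lemma AE_eventually_F_above:
  "AE x in \<Omega>. \<forall>\<epsilon>>0. eventually (\<lambda>n. kingman_limit - \<epsilon> < F n x / real n) sequentially"
proof -
  have "AE x in \<Omega>. x \<notin> slope_below (of_rat r)" if "of_rat r < kingman_limit" for r
    using prob_slope_below_below_limit[OF that] slope_below_in_sets
    by (intro AE_not_in null_setsI) (auto simp: O.emeasure_eq_measure)
  then have "AE x in \<Omega>. \<forall>r. of_rat r < kingman_limit \<longrightarrow> x \<notin> slope_below (of_rat r)"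
    by (auto simp: AE_all_countable)
  then show ?thesis
  proof (rule eventually_mono, intro allI impI)
    fix x and \<epsilon> :: real
    assume x: "\<forall>r. of_rat r < kingman_limit \<longrightarrow> x \<notin> slope_below (of_rat r)" and "\<epsilon> > 0"
    obtain r where r: "kingman_limit - \<epsilon> < of_rat r" "of_rat r < kingman_limit"
      using of_rat_dense[of "kingman_limit - \<epsilon>" kingman_limit] \<open>\<epsilon> > 0\<close> by auto
    obtain e N where "\<And>n. n \<ge> N \<Longrightarrow> real n * (of_rat r + 1 / real (Suc e)) \<le> F n x"
      using x[rule_format, OF r(2)] unfolding slope_below_def by (auto simp: not_less)
    then have slope: "of_rat r + 1 / real (Suc e) \<le> F n x / real n" if "n \<ge> max N 1" for n
      using that by (simp add: pos_le_divide_eq mult.commute)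
    show "eventually (\<lambda>n. kingman_limit - \<epsilon> < F n x / real n) sequentially"
      unfolding eventually_sequentially
    proof (intro exI allI impI)
      fix n assume "max N 1 \<le> n"
      moreover have "0 < 1 / real (Suc e)"
        by simp
      ultimately show "kingman_limit - \<epsilon> < F n x / real n"
        using slope[of n] r(1) by linarith
    qed
  qed
qed

definition no_descent_within :: "real \<Rightarrow> nat \<Rightarrow> (int \<Rightarrow> 'a) set" where
  "no_descent_within \<mu> M = {y. \<forall>n. 1 \<le> n \<and> n \<le> M \<longrightarrow> real n * \<mu> < F n y}"

lemma no_descent_within_cylinder:
  assumes "\<And>i. 0 \<le> i \<Longrightarrow> i < int (Suc M) \<Longrightarrow> x i = y i"
  shows "x \<in> no_descent_within \<mu> M \<longleftrightarrow> y \<in> no_descent_within \<mu> M"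
proof -
  have "F n x = F n y" if "n \<le> M" for n
    by (rule F_cylinder) (use assms that in auto)
  then show ?thesis
    unfolding no_descent_within_def by auto
qed

lemma no_descent_within_in_sets: "no_descent_within \<mu> M \<in> sets \<Omega>"
proof -
  have "{x. x \<in> no_descent_within \<mu> M} \<in> sets \<Omega>"
  proof (rule sets_cylinder[of "{0..<int (Suc M)}"])
    fix x y :: "int \<Rightarrow> 'a" assume "\<And>i. i \<in> {0..<int (Suc M)} \<Longrightarrow> x i = y i"
    then show "x \<in> no_descent_within \<mu> M \<longleftrightarrow> y \<in> no_descent_within \<mu> M"
      by (intro no_descent_within_cylinder) auto
  qed simp
  then show ?thesis
    by simp
qed

lemma AE_frequency_no_descent_within:
  "AE x in \<Omega>. (\<lambda>N. (\<Sum>j<N. indicator (no_descent_within \<mu> M) (shift j x)) / real N)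
     \<longlonglongrightarrow> O.prob (no_descent_within \<mu> M)"
proof -
  have "AE x in \<Omega>. (\<lambda>N. (\<Sum>j<N. indicator (no_descent_within \<mu> M) (shift j x)) / real N)
     \<longlonglongrightarrow> O.expectation (indicator (no_descent_within \<mu> M))"
  proof (rule AE_ergodic_average_cylinder_function[where m="Suc M" and H=1])
    fix x y :: "int \<Rightarrow> 'a" assume "\<And>i. 0 \<le> i \<Longrightarrow> i < int (Suc M) \<Longrightarrow> x i = y i"
    then have "x \<in> no_descent_within \<mu> M \<longleftrightarrow> y \<in> no_descent_within \<mu> M"
      by (rule no_descent_within_cylinder)
    then show "indicator (no_descent_within \<mu> M) x = (indicator (no_descent_within \<mu> M) y :: real)"
      by (simp add: indicator_def)
  qed (simp_all add: indicator_def)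
  then show ?thesis
    using no_descent_within_in_sets by simp
qed

lemma prob_no_descent_within_tendsto_0:
  assumes "kingman_limit < \<mu>"
  shows "(\<lambda>M. O.prob (no_descent_within \<mu> M)) \<longlonglongrightarrow> 0"
proof -
  obtain r :: rat where r: "kingman_limit < of_rat r" "of_rat r < \<mu>"
    using of_rat_dense[OF assms] by blast
  have "AE y in \<Omega>. y \<notin> (\<Inter>M. no_descent_within \<mu> M)"
    using O.AE_prob_1[OF prob_slope_below_above_limit[OF r(1)]]
  proof (rule eventually_mono)
    fix y assume y: "y \<in> slope_below (of_rat r)"
    obtain e where e: "1 / real (Suc e) < \<mu> - of_rat r"
      using reals_Archimedean[of "\<mu> - of_rat r"] r(2) by (auto simp: inverse_eq_divide)
    obtain n where n: "n \<ge> 1" "F n y < real n * (of_rat r + 1 / real (Suc e))"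
      using y unfolding slope_below_def by blast
    moreover have "real n * (of_rat r + 1 / real (Suc e)) \<le> real n * \<mu>"
      using e by (intro mult_left_mono) auto
    ultimately have "F n y < real n * \<mu>"
      by linarith
    then have "y \<notin> no_descent_within \<mu> n"
      using n(1) unfolding no_descent_within_def by (auto dest!: spec[of _ n])
    then show "y \<notin> (\<Inter>M. no_descent_within \<mu> M)"
      by blast
  qed
  have range: "range (no_descent_within \<mu>) \<subseteq> sets \<Omega>"
    using no_descent_within_in_sets by auto
  have "emeasure \<Omega> (\<Inter>M. no_descent_within \<mu> M) = 0"
    using \<open>AE y in \<Omega>. y \<notin> (\<Inter>M. no_descent_within \<mu> M)\<close> range
    by (subst (asm) AE_iff_measurable[of "\<Inter>M. no_descent_within \<mu> M"]) auto
  moreover have "decseq (no_descent_within \<mu>)"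
    unfolding decseq_def no_descent_within_def by auto
  ultimately show ?thesis
    using O.finite_Lim_measure_decseq[OF range] by (simp add: O.emeasure_eq_measure)
qed

lemma F_le_slope_plus_no_descent_count:
  "F N x \<le> real N * \<mu>
    + (C + \<bar>\<mu>\<bar>) * ((\<Sum>j<N. indicator (no_descent_within \<mu> M) (shift j x)) + real M)"
proof -
  have "F N (shift 0 x) \<le> real N * \<mu>
      + (C + \<bar>\<mu>\<bar>) * ((\<Sum>i\<in>{0..<0 + N}. of_bool (shift i x \<in> no_descent_within \<mu> M)) + real M)"
  proof (rule subadditive_covering_bound[where G="\<lambda>j n. F n (shift j x)" and C=C])
    show "F (n + m) (shift j x) \<le> F n (shift j x) + F m (shift (j + n) x)" for j n m
      using F_subadditive[of n m "shift j x"] by (simp add: add.commute)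
    show "F n (shift j x) \<le> real n * C" for j n
      using abs_F_le[of n "shift j x"] by simp
    show "\<exists>n\<ge>1. n \<le> M \<and> F n (shift j x) \<le> real n * \<mu>"
      if "shift j x \<notin> no_descent_within \<mu> M" for j
      using that unfolding no_descent_within_def by (auto simp: not_less)
  qed (use C_nonneg in \<open>auto simp: F_0\<close>)
  then show ?thesis
    by (simp add: indicator_def atLeast0LessThan del: sum_of_bool_eq)
qed

lemma AE_eventually_F_below:
  "AE x in \<Omega>. \<forall>\<epsilon>>0. eventually (\<lambda>n. F n x / real n < kingman_limit + \<epsilon>) sequentially"
proof -
  have "AE x in \<Omega>. \<forall>\<mu>::rat. \<forall>M::nat.
      (\<lambda>N. (\<Sum>j<N. indicator (no_descent_within (of_rat \<mu>) M) (shift j x)) / real N)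
        \<longlonglongrightarrow> O.prob (no_descent_within (of_rat \<mu>) M)"
    by (simp add: AE_all_countable AE_frequency_no_descent_within)
  then show ?thesis
  proof (rule eventually_mono, intro allI impI)
    fix x and \<epsilon> :: real
    assume freq: "\<forall>\<mu>::rat. \<forall>M::nat.
      (\<lambda>N. (\<Sum>j<N. indicator (no_descent_within (of_rat \<mu>) M) (shift j x)) / real N)
        \<longlonglongrightarrow> O.prob (no_descent_within (of_rat \<mu>) M)"
    assume "\<epsilon> > 0"
    obtain \<mu>' :: rat where \<mu>': "kingman_limit < of_rat \<mu>'" "of_rat \<mu>' < kingman_limit + \<epsilon> / 2"
      using of_rat_dense[of kingman_limit "kingman_limit + \<epsilon> / 2"] \<open>\<epsilon> > 0\<close> by auto
    define \<mu> :: real where "\<mu> = of_rat \<mu>'"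
    define D where "D = C + \<bar>\<mu>\<bar>"
    have "D \<ge> 0"
      using C_nonneg by (simp add: D_def)
    define frequency where
      "frequency M N = (\<Sum>j<N. indicator (no_descent_within \<mu> M) (shift j x)) / real N" for M N
    have "(\<lambda>M. D * O.prob (no_descent_within \<mu> M)) \<longlonglongrightarrow> D * 0"
      using prob_no_descent_within_tendsto_0 \<mu>'(1) unfolding \<mu>_def by (intro tendsto_intros)
    then have "eventually (\<lambda>M. D * O.prob (no_descent_within \<mu> M) < \<epsilon> / 4) sequentially"
      using \<open>\<epsilon> > 0\<close> by (intro order_tendstoD(2)) auto
    then obtain M where M: "D * O.prob (no_descent_within \<mu> M) < \<epsilon> / 4"
      by (meson eventually_sequentially order.refl)
    have "(\<lambda>N. D * frequency M N + D * real M / real N)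
        \<longlonglongrightarrow> D * O.prob (no_descent_within \<mu> M) + 0"
      using freq unfolding frequency_def \<mu>_def by (intro tendsto_intros) auto
    then have "eventually (\<lambda>N. D * frequency M N + D * real M / real N < \<epsilon> / 2) sequentially"
      using M mult_nonneg_nonneg[OF \<open>D \<ge> 0\<close> measure_nonneg[of \<Omega> "no_descent_within \<mu> M"]]
      by (intro order_tendstoD(2)) auto
    then show "eventually (\<lambda>n. F n x / real n < kingman_limit + \<epsilon>) sequentially"
      using eventually_gt_at_top[of 0]
    proof eventually_elim
      case (elim N)
      have "F N x / real N
          \<le> (real N * \<mu> + D * ((\<Sum>j<N. indicator (no_descent_within \<mu> M) (shift j x)) + real M)) / real N"
        using F_le_slope_plus_no_descent_count[of N x \<mu> M] by (intro divide_right_mono) (simp_all add: D_def)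
      also have "\<dots> = \<mu> + D * frequency M N + D * real M / real N"
        using elim(2) by (simp add: frequency_def field_simps)
      finally show ?case
        using elim(1) \<mu>'(2) unfolding \<mu>_def by linarith
    qed
  qed
qed

theorem kingman: "AE x in \<Omega>. (\<lambda>n. F n x / real n) \<longlonglongrightarrow> kingman_limit"
  using AE_eventually_F_above AE_eventually_F_below
proof eventually_elim
  case (elim x)
  show ?case
  proof (rule tendstoI)
    fix \<epsilon> :: real assume "\<epsilon> > 0"
    with elim have "eventually (\<lambda>n. kingman_limit - \<epsilon> < F n x / real n) sequentially"
      and "eventually (\<lambda>n. F n x / real n < kingman_limit + \<epsilon>) sequentially"
      by auto
    then show "eventually (\<lambda>n. dist (F n x / real n) kingman_limit < \<epsilon>) sequentially"
      by eventually_elim (simp add: dist_real_def abs_less_iff)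
  qed
qed

end

section \<open>Operator norms of \<open>2 \<times> 2\<close> matrices\<close>

lemma norm_mult_vec_le_mnorm: "norm (M *v v) \<le> mnorm M * norm v"
  unfolding mnorm_def by (rule onorm) simp

lemma mnorm_nonneg: "mnorm M \<ge> 0"
  unfolding mnorm_def by (rule onorm_pos_le) simp

lemma mnorm_mult_le: "mnorm (A ** B) \<le> mnorm A * mnorm B"
proof -
  have "(\<lambda>v. (A ** B) *v v) = (\<lambda>v. A *v v) \<circ> (\<lambda>v. B *v v)"
    by (auto simp: matrix_vector_mul_assoc)
  then show ?thesis
    unfolding mnorm_def by (metis onorm_compose matrix_vector_mul_bounded_linear)
qed

lemma mnorm_scaleR: "mnorm (c *\<^sub>R M) = \<bar>c\<bar> * mnorm M"
proof -
  have "(\<lambda>v. (c *\<^sub>R M) *v v) = (\<lambda>v. c *\<^sub>R (M *v v))"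
    by (simp add: scaleR_matrix_vector_assoc)
  then show ?thesis
    unfolding mnorm_def by (simp add: onorm_scaleR)
qed

lemma mnorm_mat_1: "mnorm (mat 1) = 1"
proof -
  have "(*v) (mat 1 :: mat2) = (\<lambda>v. v)"
    by (rule ext) simp
  then show ?thesis
    unfolding mnorm_def by (simp add: onorm_id)
qed

lemma mnorm_zero: "mnorm 0 = 0"
  using mnorm_scaleR[of 0 0] by simp

lemma mnorm_add_le: "mnorm (A + B) \<le> mnorm A + mnorm B"
proof -
  have "(\<lambda>v. (A + B) *v v) = (\<lambda>v. A *v v + B *v v)"
    by (simp add: matrix_vector_mult_add_rdistrib)
  then show ?thesis
    unfolding mnorm_def by (simp add: onorm_triangle)
qed

lemma mnorm_minus_commute: "mnorm (A - B) = mnorm (B - A)"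
  using mnorm_scaleR[of "-1" "A - B"] by simp

lemma abs_entry_le_mnorm: "\<bar>M $ i $ j\<bar> \<le> mnorm M"
proof -
  have "M $ i $ j = (M *v axis j 1) $ i"
    by (simp add: matrix_vector_mult_def axis_def if_distrib cong: if_cong)
  then have "\<bar>M $ i $ j\<bar> \<le> norm (M *v axis j 1)"
    using component_le_norm_cart[of "M *v axis j 1" i] by simp
  also have "\<dots> \<le> mnorm M"
    using norm_mult_vec_le_mnorm[of M "axis j 1"] by simp
  finally show ?thesis .
qed

lemma abs_det_diff_le:
  fixes X Y :: mat2
  assumes "mnorm X \<le> R" "mnorm Y \<le> R"
  shows "\<bar>det X - det Y\<bar> \<le> 4 * R * mnorm (X - Y)"
proof -
  define d where "d = mnorm (X - Y)"
  have XY: "\<bar>X$i$j - Y$i$j\<bar> \<le> d" "\<bar>X$i$j\<bar> \<le> R" "\<bar>Y$i$j\<bar> \<le> R" for i j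
    using abs_entry_le_mnorm[of "X - Y" i j] abs_entry_le_mnorm[of X i j] abs_entry_le_mnorm[of Y i j]
      assms by (simp_all add: d_def)
  have product: "\<bar>a * b\<bar> \<le> d * R" if "\<bar>a\<bar> \<le> d" "\<bar>b\<bar> \<le> R" for a b :: real
    unfolding abs_mult using that by (intro mult_mono) auto
  have "det X - det Y = (X$1$1 - Y$1$1) * X$2$2 + (X$2$2 - Y$2$2) * Y$1$1
      - (X$1$2 - Y$1$2) * X$2$1 - (X$2$1 - Y$2$1) * Y$1$2"
    by (simp add: det_2 algebra_simps)
  then have "\<bar>det X - det Y\<bar> \<le> d * R + d * R + d * R + d * R"
    using product[OF XY(1,2)] product[OF XY(1,3)] by (smt (verit))
  then show ?thesis
    by (simp add: d_def algebra_simps)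
qed

lemma det_scaleR: "det (c *\<^sub>R (M::mat2)) = c\<^sup>2 * det M"
  by (simp add: det_2 power2_eq_square algebra_simps)

lemma matrix_inv_cancel:
  fixes A :: "real^'n^'n"
  assumes "invertible A"
  shows "A ** matrix_inv A = mat 1" and "matrix_inv A ** A = mat 1"
  using someI_ex[OF assms[unfolded invertible_def]] unfolding matrix_inv_def by auto

lemma mnorm_pos_if_det_nonzero:
  fixes M :: mat2
  assumes "det M \<noteq> 0"
  shows "mnorm M > 0"
proof -
  have "M ** matrix_inv M = mat 1"
    using assms by (simp add: matrix_inv_cancel invertible_det_nz)
  then have "1 \<le> mnorm M * mnorm (matrix_inv M)"
    using mnorm_mult_le[of M "matrix_inv M"] by (simp add: mnorm_mat_1)
  then show ?thesis
    using mnorm_nonneg[of M] by (cases "mnorm M = 0") auto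
qed

section \<open>Linear cocycles over the Bernoulli shift\<close>

lemma coc_iter_add: "coc_iter B (n + m) x = coc_iter B m (shift n x) ** coc_iter B n x"
  by (induction m) (simp_all add: matrix_mul_assoc add.commute)

lemma coc_iter_Suc_shift: "coc_iter B (Suc n) x = coc_iter B n (shift 1 x) ** B (x 0)"
  using coc_iter_add[of B 1 n x] by simp

lemma det_coc_iter: "det (coc_iter B n x) = (\<Prod>i<n. det (B (x (int i))))"
  by (induction n) (simp_all add: det_mul)

lemma coc_iter_cylinder:
  "(\<And>i. 0 \<le> i \<Longrightarrow> i < int n \<Longrightarrow> x i = y i) \<Longrightarrow> coc_iter B n x = coc_iter B n y"
  by (induction n) auto

lemma coc_iter_scaleR:
  assumes "\<And>j. B j = s j *\<^sub>R B' j"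
  shows "coc_iter B n x = (\<Prod>i<n. s (x (int i))) *\<^sub>R coc_iter B' n x"
  by (induction n) (simp_all add: assms matrix_scalar_ac scalar_matrix_assoc[symmetric] mult.commute)

lemma mnorm_coc_iter_pos: "B \<in> GL2 \<Longrightarrow> mnorm (coc_iter B n x) > 0"
  by (rule mnorm_pos_if_det_nonzero) (simp add: det_coc_iter GL2_def)

lemma SL2_subset_GL2: "SL2 \<subseteq> GL2"
  unfolding SL2_def GL2_def by (auto dest: arg_cong[of _ 0 abs])

section \<open>The top Lyapunov exponent as an almost sure limit\<close>

lemma ln_mnorm_mult_le:
  fixes A B :: mat2
  assumes "det A \<noteq> 0" "det B \<noteq> 0"
  shows "ln (mnorm (A ** B)) \<le> ln (mnorm A) + ln (mnorm B)"
proof -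
  have "mnorm (A ** B) > 0" "mnorm A > 0" "mnorm B > 0"
    using assms by (simp_all add: mnorm_pos_if_det_nonzero det_mul)
  then have "ln (mnorm (A ** B)) \<le> ln (mnorm A * mnorm B)"
    using mnorm_mult_le[of A B] by simp
  then show ?thesis
    using \<open>mnorm A > 0\<close> \<open>mnorm B > 0\<close> by (simp add: ln_mult)
qed

lemma abs_ln_mnorm_mult_diff_le:
  fixes P M :: mat2
  assumes P: "det P \<noteq> 0" and M: "det M \<noteq> 0"
  shows "\<bar>ln (mnorm (P ** M)) - ln (mnorm P)\<bar> \<le> \<bar>ln (mnorm M)\<bar> + \<bar>ln (mnorm (matrix_inv M))\<bar>"
proof -
  have inv: "M ** matrix_inv M = mat 1"
    using M by (simp add: matrix_inv_cancel invertible_det_nz)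
  then have "det M * det (matrix_inv M) = 1"
    by (metis det_I det_mul)
  then have "det (matrix_inv M) \<noteq> 0"
    by auto
  moreover have "P = (P ** M) ** matrix_inv M"
    by (simp add: matrix_mul_assoc[symmetric] inv)
  ultimately have "ln (mnorm P) \<le> ln (mnorm (P ** M)) + ln (mnorm (matrix_inv M))"
    using ln_mnorm_mult_le[of "P ** M" "matrix_inv M"] P M by (simp add: det_mul)
  moreover have "ln (mnorm (P ** M)) \<le> ln (mnorm P) + ln (mnorm M)"
    using ln_mnorm_mult_le[OF P M] .
  ultimately show ?thesis
    by linarith
qed

definition log_norm_bound :: "('a::finite \<Rightarrow> mat2) \<Rightarrow> real" where
  "log_norm_bound B = (\<Sum>j\<in>UNIV. \<bar>ln (mnorm (B j))\<bar> + \<bar>ln (mnorm (matrix_inv (B j)))\<bar>)"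

lemma subadditive_process_ln_mnorm:
  assumes B: "B \<in> GL2"
  shows "subadditive_process (\<lambda>n x. ln (mnorm (coc_iter B n x))) (log_norm_bound B)"
proof
  show "ln (mnorm (coc_iter B 0 x)) = 0" for x
    by (simp add: mnorm_mat_1)
  show "ln (mnorm (coc_iter B (n + m) x))
      \<le> ln (mnorm (coc_iter B n x)) + ln (mnorm (coc_iter B m (shift n x)))" for n m x
    using ln_mnorm_mult_le[of "coc_iter B m (shift n x)" "coc_iter B n x"] B
    by (simp add: coc_iter_add det_coc_iter GL2_def)
  show "\<bar>ln (mnorm (coc_iter B (Suc n) x)) - ln (mnorm (coc_iter B n (shift 1 x)))\<bar>
      \<le> log_norm_bound B" for n x
  proof -
    have "\<bar>ln (mnorm (coc_iter B (Suc n) x)) - ln (mnorm (coc_iter B n (shift 1 x)))\<bar>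
        \<le> \<bar>ln (mnorm (B (x 0)))\<bar> + \<bar>ln (mnorm (matrix_inv (B (x 0))))\<bar>"
      unfolding coc_iter_Suc_shift using B
      by (intro abs_ln_mnorm_mult_diff_le) (simp_all add: det_coc_iter GL2_def)
    also have "\<dots> \<le> log_norm_bound B"
      unfolding log_norm_bound_def by (rule member_le_sum) auto
    finally show ?thesis .
  qed
  show "ln (mnorm (coc_iter B n x)) = ln (mnorm (coc_iter B n y))"
    if "\<And>i. 0 \<le> i \<Longrightarrow> i < int n \<Longrightarrow> x i = y i" for n x y
    using coc_iter_cylinder[OF that] by simp
qed

context bernoulli_shift
begin

lemma Lplus_eqI:
  assumes "AE x in \<Omega>. (\<lambda>n. ln (mnorm (coc_iter B n x)) / real n) \<longlonglongrightarrow> L"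
  shows "Lplus p B = L"
  unfolding Lplus_def
proof (rule the_equality)
  fix L' assume "AE x in \<Omega>. (\<lambda>n. ln (mnorm (coc_iter B n x)) / real n) \<longlonglongrightarrow> L'"
  with assms have "AE x in \<Omega>. L' = L"
    by eventually_elim (rule LIMSEQ_unique)
  then show "L' = L"
    by (simp add: O.AE_const)
qed (rule assms)

theorem AE_tendsto_Lplus:
  assumes "B \<in> GL2"
  shows "AE x in \<Omega>. (\<lambda>n. ln (mnorm (coc_iter B n x)) / real n) \<longlonglongrightarrow> Lplus p B"
proof -
  interpret subadditive_process p "\<lambda>n x. ln (mnorm (coc_iter B n x))" "log_norm_bound B"
    by (rule subadditive_process_ln_mnorm[OF assms])
  show ?thesis
    using kingman Lplus_eqI[OF kingman] by simp
qed

end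

section \<open>Splitting off the determinant\<close>

definition log_scale :: "('a \<Rightarrow> mat2) \<Rightarrow> 'a \<Rightarrow> real" where
  "log_scale B j = ln (sqrt \<bar>det (B j)\<bar>)"

definition mean_log_scale :: "'a pmf \<Rightarrow> ('a \<Rightarrow> mat2) \<Rightarrow> real" where
  "mean_log_scale p B = measure_pmf.expectation p (log_scale B)"

lemma normalize_coc_in_SL2:
  assumes "B \<in> GL2"
  shows "normalize_coc B \<in> SL2"
proof -
  have "\<bar>det (normalize_coc B j)\<bar> = 1" for j
    using assms by (simp add: normalize_coc_def det_scaleR power_divide abs_mult GL2_def)
  then show ?thesis
    unfolding SL2_def by simp
qed

lemma ln_mnorm_coc_iter_split:
  assumes B: "B \<in> GL2"
  shows "ln (mnorm (coc_iter B n x))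
    = ln (mnorm (coc_iter (normalize_coc B) n x)) + (\<Sum>i<n. log_scale B (x (int i)))"
proof -
  define s where "s j = sqrt \<bar>det (B j)\<bar>" for j
  have s: "s j > 0" for j
    using B by (simp add: s_def GL2_def)
  have "coc_iter B n x = (\<Prod>i<n. s (x (int i))) *\<^sub>R coc_iter (normalize_coc B) n x"
    by (rule coc_iter_scaleR) (use s in \<open>simp add: s_def normalize_coc_def\<close>)
  moreover have "mnorm (coc_iter (normalize_coc B) n x) > 0"
    using normalize_coc_in_SL2[OF B] SL2_subset_GL2 by (intro mnorm_coc_iter_pos) auto
  moreover have "ln (\<Prod>i<n. s (x (int i))) = (\<Sum>i<n. log_scale B (x (int i)))"
    using s by (simp add: ln_prod log_scale_def s_def)
  moreover have "(\<Prod>i<n. s (x (int i))) > 0"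
    using s by (simp add: prod_pos)
  ultimately show ?thesis
    using mnorm_scaleR[of "\<Prod>i<n. s (x (int i))" "coc_iter (normalize_coc B) n x"]
    by (simp add: ln_mult abs_of_pos del: prod_zero_iff)
qed

context bernoulli_shift
begin

lemma expectation_coordinate:
  fixes g :: "'a \<Rightarrow> real"
  shows "O.expectation (\<lambda>x. g (x i)) = measure_pmf.expectation p g"
proof -
  have "(\<lambda>x. x i) \<in> measurable \<Omega> (measure_pmf p)"
    unfolding bernoulli_def by (rule measurable_component_singleton) simp
  then have "O.expectation (\<lambda>x. g (x i)) = integral\<^sup>L (distr \<Omega> (measure_pmf p) (\<lambda>x. x i)) g"
    by (simp add: integral_distr)
  also have "distr \<Omega> (measure_pmf p) (\<lambda>x. x i) = measure_pmf p"
    unfolding bernoulli_def by (rule P.PiM_component) simp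
  finally show ?thesis .
qed

lemma Lplus_split:
  assumes B: "B \<in> GL2"
  shows "Lplus p B = Lplus p (normalize_coc B) + mean_log_scale p B"
proof (rule Lplus_eqI)
  have "AE x in \<Omega>. (\<lambda>n. (\<Sum>i<n. log_scale B (shift i x 0)) / real n)
      \<longlonglongrightarrow> O.expectation (\<lambda>x. log_scale B (x 0))"
    by (rule AE_ergodic_average_cylinder_function[where m=1 and H="\<Sum>j\<in>UNIV. \<bar>log_scale B j\<bar>"])
      (auto intro: member_le_sum)
  moreover have "AE x in \<Omega>. (\<lambda>n. ln (mnorm (coc_iter (normalize_coc B) n x)) / real n)
      \<longlonglongrightarrow> Lplus p (normalize_coc B)"
    using normalize_coc_in_SL2[OF B] SL2_subset_GL2 by (intro AE_tendsto_Lplus) auto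
  ultimately show "AE x in \<Omega>. (\<lambda>n. ln (mnorm (coc_iter B n x)) / real n)
      \<longlonglongrightarrow> Lplus p (normalize_coc B) + mean_log_scale p B"
  proof eventually_elim
    case (elim x)
    then show ?case
      using tendsto_add[OF elim(2,1)]
      by (simp add: ln_mnorm_coc_iter_split[OF B] add_divide_distrib expectation_coordinate
          mean_log_scale_def)
  qed
qed

end

section \<open>Local estimates near an invertible cocycle\<close>

lemma mnorm_le_coc_dist: "mnorm (B1 j - B2 j) \<le> coc_dist B1 B2"
  unfolding coc_dist_def by (rule Max_ge) auto

lemma coc_dist_le: "(\<And>j. mnorm (B1 j - B2 j) \<le> c) \<Longrightarrow> coc_dist B1 B2 \<le> c"
  unfolding coc_dist_def by (subst Max_le_iff) auto

lemma coc_dist_nonneg: "coc_dist B1 B2 \<ge> 0"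
  using mnorm_le_coc_dist[of B1 undefined B2] mnorm_nonneg by (rule order_trans[rotated])

lemma coc_dist_self: "coc_dist A A = 0"
  by (simp add: coc_dist_def mnorm_zero)

lemma coc_dist_triangle: "coc_dist B1 B2 \<le> coc_dist B1 A + coc_dist B2 A"
proof (rule coc_dist_le)
  fix j
  have "mnorm (B1 j - B2 j) \<le> mnorm (B1 j - A j) + mnorm (A j - B2 j)"
    using mnorm_add_le[of "B1 j - A j" "A j - B2 j"] by simp
  then show "mnorm (B1 j - B2 j) \<le> coc_dist B1 A + coc_dist B2 A"
    using mnorm_le_coc_dist[of B1 j A] mnorm_le_coc_dist[of B2 j A] mnorm_minus_commute[of "A j" "B2 j"]
    by linarith
qed

lemma abs_ln_diff_le:
  fixes u v a :: real
  assumes "0 < a" "a \<le> u" "a \<le> v"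
  shows "\<bar>ln u - ln v\<bar> \<le> \<bar>u - v\<bar> / a"
proof -
  have "ln x - ln y \<le> \<bar>x - y\<bar> / a" if "a \<le> x" "a \<le> y" for x y
  proof -
    have "ln x - ln y = ln (x / y)"
      using that assms by (simp add: ln_div)
    also have "\<dots> \<le> (x - y) / y"
      using that assms ln_le_minus_one[of "x / y"] by (simp add: diff_divide_distrib)
    also have "\<dots> \<le> \<bar>x - y\<bar> / a"
      using that assms by (intro frac_le) auto
    finally show ?thesis .
  qed
  from this[of u v] this[of v u] show ?thesis
    using assms by (simp add: abs_minus_commute)
qed

lemma abs_inverse_sqrt_diff_le:
  fixes u v a :: real
  assumes "0 < a" "a \<le> u" "a \<le> v"
  shows "\<bar>1 / sqrt u - 1 / sqrt v\<bar> \<le> \<bar>u - v\<bar> / (a * sqrt a)"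
proof -
  have roots: "sqrt a \<le> sqrt u" "sqrt a \<le> sqrt v" "0 < sqrt a"
    using assms by simp_all
  have "(sqrt u - sqrt v) * (sqrt u + sqrt v) = u - v"
    using assms by (simp add: algebra_simps)
  then have "\<bar>sqrt u - sqrt v\<bar> * (sqrt u + sqrt v) = \<bar>u - v\<bar>"
    using roots by (metis abs_mult abs_of_pos add_pos_pos order.strict_trans2)
  then have "\<bar>sqrt u - sqrt v\<bar> * sqrt a \<le> \<bar>u - v\<bar>"
    using roots by (smt (verit) abs_ge_zero mult_left_mono)
  then have diff: "\<bar>sqrt u - sqrt v\<bar> \<le> \<bar>u - v\<bar> / sqrt a"
    using roots by (simp add: pos_le_divide_eq)
  have "sqrt a * sqrt a \<le> sqrt u * sqrt v"
    using roots by (intro mult_mono) auto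
  then have prod: "a \<le> sqrt u * sqrt v"
    using assms(1) by simp
  have "\<bar>1 / sqrt u - 1 / sqrt v\<bar> = \<bar>sqrt u - sqrt v\<bar> / (sqrt u * sqrt v)"
    using roots by (simp add: field_simps abs_minus_commute)
  also have "\<dots> \<le> \<bar>sqrt u - sqrt v\<bar> / a"
    using prod assms(1) by (intro divide_left_mono) auto
  also have "\<dots> \<le> \<bar>u - v\<bar> / sqrt a / a"
    using diff assms(1) by (intro divide_right_mono) auto
  finally show ?thesis
    by (simp add: mult.commute)
qed

lemma abs_ln_sqrt_det_diff_le:
  fixes X Y :: mat2
  assumes "mnorm X \<le> R" "mnorm Y \<le> R" "0 < a" "a \<le> \<bar>det X\<bar>" "a \<le> \<bar>det Y\<bar>"
  shows "\<bar>ln (sqrt \<bar>det X\<bar>) - ln (sqrt \<bar>det Y\<bar>)\<bar> \<le> 2 * R / a * mnorm (X - Y)"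
proof -
  have "\<bar>ln (sqrt \<bar>det X\<bar>) - ln (sqrt \<bar>det Y\<bar>)\<bar> = \<bar>ln \<bar>det X\<bar> - ln \<bar>det Y\<bar>\<bar> / 2"
    by (simp add: ln_sqrt diff_divide_distrib[symmetric])
  also have "\<dots> \<le> \<bar>\<bar>det X\<bar> - \<bar>det Y\<bar>\<bar> / a / 2"
    using abs_ln_diff_le[OF assms(3-5)] by simp
  also have "\<dots> \<le> 4 * R * mnorm (X - Y) / a / 2"
    using abs_det_diff_le[OF assms(1,2)] assms(3)
    by (intro divide_right_mono order_trans[OF abs_triangle_ineq3]) auto
  finally show ?thesis
    by simp
qed

lemma mnorm_normalize_diff_le:
  fixes X Y :: mat2
  assumes "mnorm X \<le> R" "mnorm Y \<le> R" "0 < a" "a \<le> \<bar>det X\<bar>" "a \<le> \<bar>det Y\<bar>"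
  shows "mnorm ((1 / sqrt \<bar>det X\<bar>) *\<^sub>R X - (1 / sqrt \<bar>det Y\<bar>) *\<^sub>R Y)
    \<le> (1 / sqrt a + 4 * R * R / (a * sqrt a)) * mnorm (X - Y)"
proof -
  define s t where "s = 1 / sqrt \<bar>det X\<bar>" and "t = 1 / sqrt \<bar>det Y\<bar>"
  have "R \<ge> 0"
    using assms(1) mnorm_nonneg[of X] by linarith
  have s: "\<bar>s\<bar> \<le> 1 / sqrt a"
    using assms(3,4) unfolding s_def by (simp add: frac_le)
  have st: "\<bar>s - t\<bar> \<le> 4 * R * mnorm (X - Y) / (a * sqrt a)"
  proof -
    have "\<bar>s - t\<bar> \<le> \<bar>\<bar>det X\<bar> - \<bar>det Y\<bar>\<bar> / (a * sqrt a)"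
      unfolding s_def t_def by (rule abs_inverse_sqrt_diff_le[OF assms(3-5)])
    also have "\<dots> \<le> 4 * R * mnorm (X - Y) / (a * sqrt a)"
      using abs_det_diff_le[OF assms(1,2)] assms(3)
      by (intro divide_right_mono order_trans[OF abs_triangle_ineq3]) auto
    finally show ?thesis .
  qed
  have "mnorm (s *\<^sub>R X - t *\<^sub>R Y) \<le> mnorm (s *\<^sub>R (X - Y)) + mnorm ((s - t) *\<^sub>R Y)"
    using mnorm_add_le[of "s *\<^sub>R (X - Y)" "(s - t) *\<^sub>R Y"] by (simp add: algebra_simps)
  also have "\<dots> = \<bar>s\<bar> * mnorm (X - Y) + \<bar>s - t\<bar> * mnorm Y"
    by (simp add: mnorm_scaleR)
  also have "\<dots> \<le> 1 / sqrt a * mnorm (X - Y) + 4 * R * mnorm (X - Y) / (a * sqrt a) * R"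
    using s st assms(2,3) by (intro add_mono mult_mono) (auto simp: mnorm_nonneg)
  finally show ?thesis
    unfolding s_def t_def by (simp add: algebra_simps)
qed

lemma bounds_near_GL2:
  fixes A :: "'a::finite \<Rightarrow> mat2"
  assumes "A \<in> GL2"
  obtains \<delta> a R where "\<delta> > 0" "a > 0"
    and "\<And>B j. coc_dist B A < \<delta> \<Longrightarrow> mnorm (B j) \<le> R"
    and "\<And>B j. coc_dist B A < \<delta> \<Longrightarrow> a \<le> \<bar>det (B j)\<bar>"
proof -
  define R where "R = (\<Sum>j\<in>UNIV. mnorm (A j)) + 1"
  have R: "mnorm (A j) \<le> R - 1" for j
    unfolding R_def using member_le_sum[of j UNIV "\<lambda>j. mnorm (A j)"] mnorm_nonneg by auto
  have "R \<ge> 1"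
    unfolding R_def by (simp add: sum_nonneg mnorm_nonneg)
  define a where "a = Min (range (\<lambda>j. \<bar>det (A j)\<bar>))"
  have "a > 0"
    unfolding a_def using assms by (subst Min_gr_iff) (auto simp: GL2_def)
  have a: "a \<le> \<bar>det (A j)\<bar>" for j
    unfolding a_def by (rule Min_le) auto
  define \<delta> where "\<delta> = min 1 (a / (8 * R))"
  have "\<delta> > 0"
    using \<open>a > 0\<close> \<open>R \<ge> 1\<close> by (simp add: \<delta>_def)
  have near: "mnorm (B j) \<le> R \<and> a / 2 \<le> \<bar>det (B j)\<bar>" if "coc_dist B A < \<delta>" for B j
  proof
    have d: "mnorm (B j - A j) < \<delta>"
      using mnorm_le_coc_dist[of B j A] that by linarith
    have "mnorm (B j) \<le> mnorm (A j) + mnorm (B j - A j)"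
      using mnorm_add_le[of "A j" "B j - A j"] by simp
    then show B: "mnorm (B j) \<le> R"
      using R[of j] d by (simp add: \<delta>_def)
    have "\<bar>det (B j) - det (A j)\<bar> \<le> 4 * R * mnorm (B j - A j)"
      using R[of j] by (intro abs_det_diff_le B) linarith
    also have "\<dots> \<le> 4 * R * (a / (8 * R))"
      using d \<open>R \<ge> 1\<close> by (intro mult_left_mono) (auto simp: \<delta>_def)
    also have "\<dots> = a / 2"
      using \<open>R \<ge> 1\<close> by simp
    finally show "a / 2 \<le> \<bar>det (B j)\<bar>"
      using a[of j] by linarith
  qed
  show ?thesis
  proof (rule that[of \<delta> "a / 2" R])
    show "mnorm (B j) \<le> R" if "coc_dist B A < \<delta>" for B j
      using near[OF that] by blast
    show "a / 2 \<le> \<bar>det (B j)\<bar>" if "coc_dist B A < \<delta>" for B j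
      using near[OF that] by blast
  qed (use \<open>\<delta> > 0\<close> \<open>a > 0\<close> in auto)
qed

lemma log_scale_lipschitz:
  assumes "\<And>j. mnorm (B1 j) \<le> R" "\<And>j. mnorm (B2 j) \<le> R" "0 < a"
    and "\<And>j. a \<le> \<bar>det (B1 j)\<bar>" "\<And>j. a \<le> \<bar>det (B2 j)\<bar>"
  shows "\<bar>log_scale B1 j - log_scale B2 j\<bar> \<le> 2 * R / a * coc_dist B1 B2"
proof -
  have "R \<ge> 0"
    using assms(1)[of j] mnorm_nonneg[of "B1 j"] by linarith
  have "\<bar>log_scale B1 j - log_scale B2 j\<bar> \<le> 2 * R / a * mnorm (B1 j - B2 j)"
    unfolding log_scale_def by (intro abs_ln_sqrt_det_diff_le assms)
  also have "\<dots> \<le> 2 * R / a * coc_dist B1 B2"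
    using \<open>R \<ge> 0\<close> \<open>0 < a\<close> by (intro mult_left_mono mnorm_le_coc_dist) auto
  finally show ?thesis .
qed

lemma normalize_coc_lipschitz:
  assumes "\<And>j. mnorm (B1 j) \<le> R" "\<And>j. mnorm (B2 j) \<le> R" "0 < a"
    and "\<And>j. a \<le> \<bar>det (B1 j)\<bar>" "\<And>j. a \<le> \<bar>det (B2 j)\<bar>"
  shows "coc_dist (normalize_coc B1) (normalize_coc B2)
    \<le> (1 / sqrt a + 4 * R * R / (a * sqrt a)) * coc_dist B1 B2"
proof (rule coc_dist_le)
  fix j
  have "R \<ge> 0"
    using assms(1)[of j] mnorm_nonneg[of "B1 j"] by linarith
  have "mnorm (normalize_coc B1 j - normalize_coc B2 j)
      \<le> (1 / sqrt a + 4 * R * R / (a * sqrt a)) * mnorm (B1 j - B2 j)"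
    unfolding normalize_coc_def by (intro mnorm_normalize_diff_le assms)
  also have "\<dots> \<le> (1 / sqrt a + 4 * R * R / (a * sqrt a)) * coc_dist B1 B2"
    using \<open>R \<ge> 0\<close> \<open>0 < a\<close> by (intro mult_left_mono mnorm_le_coc_dist) auto
  finally show "mnorm (normalize_coc B1 j - normalize_coc B2 j)
      \<le> (1 / sqrt a + 4 * R * R / (a * sqrt a)) * coc_dist B1 B2" .
qed

lemma local_estimates_near_GL2:
  fixes A :: "'a::finite \<Rightarrow> mat2"
  assumes "A \<in> GL2"
  obtains \<delta> L H where "\<delta> > 0" "L \<ge> 0"
    and "\<And>B. coc_dist B A < \<delta> \<Longrightarrow> B \<in> GL2"
    and "\<And>B j. coc_dist B A < \<delta> \<Longrightarrow> \<bar>log_scale B j\<bar> \<le> H"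
    and "\<And>B1 B2 j. coc_dist B1 A < \<delta> \<Longrightarrow> coc_dist B2 A < \<delta> \<Longrightarrow>
      \<bar>log_scale B1 j - log_scale B2 j\<bar> \<le> L * coc_dist B1 B2"
    and "\<And>B1 B2. coc_dist B1 A < \<delta> \<Longrightarrow> coc_dist B2 A < \<delta> \<Longrightarrow>
      coc_dist (normalize_coc B1) (normalize_coc B2) \<le> L * coc_dist B1 B2"
proof -
  obtain \<delta> a R where "\<delta> > 0" "a > 0"
    and R: "\<And>B j. coc_dist B A < \<delta> \<Longrightarrow> mnorm (B j) \<le> R"
    and a: "\<And>B j. coc_dist B A < \<delta> \<Longrightarrow> a \<le> \<bar>det (B j)\<bar>"
    using bounds_near_GL2[OF assms] by blast
  have A_near: "coc_dist A A < \<delta>"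
    using \<open>\<delta> > 0\<close> by (simp add: coc_dist_self)
  have "R \<ge> 0"
    using R[OF A_near, of undefined] mnorm_nonneg[of "A undefined"] by linarith
  define L where "L = 2 * R / a + (1 / sqrt a + 4 * R * R / (a * sqrt a))"
  have L: "2 * R / a \<le> L" "1 / sqrt a + 4 * R * R / (a * sqrt a) \<le> L" "L \<ge> 0"
    using \<open>a > 0\<close> \<open>R \<ge> 0\<close> by (simp_all add: L_def)
  have GL2: "B \<in> GL2" if "coc_dist B A < \<delta>" for B
  proof -
    have "det (B j) \<noteq> 0" for j
      using a[OF that, of j] \<open>a > 0\<close> by auto
    then show ?thesis
      unfolding GL2_def by simp
  qed
  have lip_scale: "\<bar>log_scale B1 j - log_scale B2 j\<bar> \<le> L * coc_dist B1 B2"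
    if "coc_dist B1 A < \<delta>" "coc_dist B2 A < \<delta>" for B1 B2 j
  proof -
    have "\<bar>log_scale B1 j - log_scale B2 j\<bar> \<le> 2 * R / a * coc_dist B1 B2"
      by (rule log_scale_lipschitz) (use R a that \<open>a > 0\<close> in auto)
    also have "\<dots> \<le> L * coc_dist B1 B2"
      by (rule mult_right_mono[OF L(1) coc_dist_nonneg])
    finally show ?thesis .
  qed
  have lip_normalize: "coc_dist (normalize_coc B1) (normalize_coc B2) \<le> L * coc_dist B1 B2"
    if "coc_dist B1 A < \<delta>" "coc_dist B2 A < \<delta>" for B1 B2
  proof -
    have "coc_dist (normalize_coc B1) (normalize_coc B2)
        \<le> (1 / sqrt a + 4 * R * R / (a * sqrt a)) * coc_dist B1 B2"
      by (rule normalize_coc_lipschitz) (use R a that \<open>a > 0\<close> in auto)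
    also have "\<dots> \<le> L * coc_dist B1 B2"
      by (rule mult_right_mono[OF L(2) coc_dist_nonneg])
    finally show ?thesis .
  qed
  define H where "H = (\<Sum>j\<in>UNIV. \<bar>log_scale A j\<bar>) + L * \<delta>"
  have bound: "\<bar>log_scale B j\<bar> \<le> H" if "coc_dist B A < \<delta>" for B j
  proof -
    have "\<bar>log_scale B j - log_scale A j\<bar> \<le> L * \<delta>"
      using lip_scale[OF that A_near, of j] mult_left_mono[OF less_imp_le[OF that] L(3)] by linarith
    moreover have "\<bar>log_scale A j\<bar> \<le> (\<Sum>j\<in>UNIV. \<bar>log_scale A j\<bar>)"
      by (rule member_le_sum) auto
    ultimately show ?thesis
      unfolding H_def by linarith
  qed
  show ?thesis
    using \<open>\<delta> > 0\<close> L(3) GL2 bound lip_scale lip_normalize by (rule that)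
qed

lemma normalize_coc_close:
  assumes "coc_dist (normalize_coc B) (normalize_coc A) \<le> L * coc_dist B A"
    and "L \<ge> 0" and "coc_dist B A < \<delta> / (L + 1)"
  shows "coc_dist (normalize_coc B) (normalize_coc A) < \<delta>"
proof -
  have "L * coc_dist B A \<le> (L + 1) * coc_dist B A"
    using coc_dist_nonneg[of B A] by (simp add: algebra_simps)
  also have "\<dots> < \<delta>"
    using assms(2,3) by (simp add: field_simps)
  finally show ?thesis
    using assms(1) by linarith
qed

lemma normalized_near_GL2:
  fixes A :: "'a::finite \<Rightarrow> mat2"
  assumes "A \<in> GL2" and "\<delta>' > 0"
  obtains \<delta> H where "\<delta> > 0" "H \<ge> 0"
    and "\<And>B. coc_dist B A < \<delta> \<Longrightarrow> B \<in> GL2 \<and> normalize_coc B \<in> SL2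
      \<and> coc_dist (normalize_coc B) (normalize_coc A) < \<delta>' \<and> (\<forall>j. \<bar>log_scale B j\<bar> \<le> H)"
proof -
  obtain \<delta> L H where "\<delta> > 0" "L \<ge> 0"
    and GL2: "\<And>B. coc_dist B A < \<delta> \<Longrightarrow> B \<in> GL2"
    and H: "\<And>B j. coc_dist B A < \<delta> \<Longrightarrow> \<bar>log_scale B j\<bar> \<le> H"
    and "\<And>B1 B2 j. coc_dist B1 A < \<delta> \<Longrightarrow> coc_dist B2 A < \<delta> \<Longrightarrow>
      \<bar>log_scale B1 j - log_scale B2 j\<bar> \<le> L * coc_dist B1 B2"
    and lip: "\<And>B1 B2. coc_dist B1 A < \<delta> \<Longrightarrow> coc_dist B2 A < \<delta> \<Longrightarrow>
      coc_dist (normalize_coc B1) (normalize_coc B2) \<le> L * coc_dist B1 B2"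
    using local_estimates_near_GL2[OF assms(1)] by blast
  have A_near: "coc_dist A A < \<delta>"
    using \<open>\<delta> > 0\<close> by (simp add: coc_dist_self)
  show ?thesis
  proof (rule that[of "min \<delta> (\<delta>' / (L + 1))" H])
    show "min \<delta> (\<delta>' / (L + 1)) > 0"
      using \<open>\<delta> > 0\<close> \<open>\<delta>' > 0\<close> \<open>L \<ge> 0\<close> by simp
    show "H \<ge> 0"
      using H[OF A_near, of undefined] by linarith
    fix B assume B: "coc_dist B A < min \<delta> (\<delta>' / (L + 1))"
    then have "B \<in> GL2"
      using GL2 by simp
    moreover have "coc_dist (normalize_coc B) (normalize_coc A) < \<delta>'"
      using B lip[OF _ A_near, of B] \<open>L \<ge> 0\<close> by (intro normalize_coc_close) auto
    ultimately show "B \<in> GL2 \<and> normalize_coc B \<in> SL2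
      \<and> coc_dist (normalize_coc B) (normalize_coc A) < \<delta>' \<and> (\<forall>j. \<bar>log_scale B j\<bar> \<le> H)"
      using B H by (simp add: normalize_coc_in_SL2)
  qed
qed

section \<open>Transfer of large deviation estimates and of the modulus of continuity\<close>

lemma three_exp_le:
  fixes c X :: real
  assumes "ln 3 < c * X" and "P1 < exp (- (2 * c * X))" and "P2 \<le> 2 * exp (- (2 * c * X))"
  shows "P1 + P2 < exp (- (c * X))"
proof -
  have "3 < exp (c * X)"
    using assms(1) by (metis exp_less_cancel_iff exp_ln zero_less_numeral)
  then have "3 * exp (- (2 * c * X)) < exp (c * X) * exp (- (2 * c * X))"
    by simp
  also have "\<dots> = exp (- (c * X))"
    by (simp flip: exp_add)
  finally show ?thesis
    using assms(2,3) by linarith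
qed

lemma eventually_subexp_rates:
  fixes a b a' b' k :: real
  assumes "0 < a" "a < a'" "0 < b" "b < b'" "2 * a + b < 1" "0 < k"
  shows "eventually (\<lambda>n. real n powr - a' \<le> real n powr - a / 2
      \<and> exp (- (real n powr b')) \<le> exp (- (real n powr b)) / 2
      \<and> 2 * exp (- (k * real n * (real n powr - a / 2)\<^sup>2)) \<le> exp (- (real n powr b)) / 2) sequentially"
  using assms by (intro eventually_conj) real_asymp+

context bernoulli_shift
begin

definition deviation_event :: "('a \<Rightarrow> mat2) \<Rightarrow> nat \<Rightarrow> real \<Rightarrow> (int \<Rightarrow> 'a) set" where
  "deviation_event B n t = {x \<in> space \<Omega>. \<bar>ln (mnorm (coc_iter B n x)) / real n - Lplus p B\<bar> > t}"

lemma deviation_event_in_sets: "deviation_event B n t \<in> sets \<Omega>"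
proof -
  have "{x. \<bar>ln (mnorm (coc_iter B n x)) / real n - Lplus p B\<bar> > t} \<in> sets \<Omega>"
  proof (rule sets_cylinder[of "{0..<int n}"])
    fix x y :: "int \<Rightarrow> 'a" assume "\<And>i. i \<in> {0..<int n} \<Longrightarrow> x i = y i"
    then have "coc_iter B n x = coc_iter B n y"
      by (intro coc_iter_cylinder) auto
    then show "\<bar>ln (mnorm (coc_iter B n x)) / real n - Lplus p B\<bar> > t
        \<longleftrightarrow> \<bar>ln (mnorm (coc_iter B n y)) / real n - Lplus p B\<bar> > t"
      by simp
  qed simp
  then show ?thesis
    by (simp add: deviation_event_def)
qed

lemma prob_deviation_event_antimono:
  "s \<le> t \<Longrightarrow> O.prob (deviation_event B n t) \<le> O.prob (deviation_event B n s)"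
  using deviation_event_in_sets by (intro O.finite_measure_mono) (auto simp: deviation_event_def)

text \<open>A deviation for \<open>B\<close> is a deviation for \<open>normalize_coc B\<close> or one of the i.i.d.\ averages
  of \<open>log_scale B\<close>, which Hoeffding's inequality controls.\<close>

lemma prob_deviation_event_le:
  assumes B: "B \<in> GL2" and n: "0 < n" and H: "\<And>j. \<bar>log_scale B j\<bar> \<le> H" and t: "0 \<le> t"
  shows "O.prob (deviation_event B n (2 * t))
    \<le> O.prob (deviation_event (normalize_coc B) n t) + 2 * exp (- (real n * t\<^sup>2 / (2 * (H + 1)\<^sup>2)))"
proof -
  define average_deviation where "average_deviation =
    {x \<in> space \<Omega>. t \<le> \<bar>(\<Sum>k<n. log_scale B (x (int k))) / real n - mean_log_scale p B\<bar>}"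
  have "{x. t \<le> \<bar>(\<Sum>k<n. log_scale B (x (int k))) / real n - mean_log_scale p B\<bar>} \<in> sets \<Omega>"
    by (rule sets_cylinder[of "{0..<int n}"]) (auto intro!: sum.cong)
  then have average_deviation: "average_deviation \<in> sets \<Omega>"
    by (simp add: average_deviation_def)
  have split: "deviation_event B n (2 * t) \<subseteq> deviation_event (normalize_coc B) n t \<union> average_deviation"
  proof
    fix x assume "x \<in> deviation_event B n (2 * t)"
    moreover have "ln (mnorm (coc_iter B n x)) / real n - Lplus p B
      = (ln (mnorm (coc_iter (normalize_coc B) n x)) / real n - Lplus p (normalize_coc B))
        + ((\<Sum>k<n. log_scale B (x (int k))) / real n - mean_log_scale p B)"
      unfolding ln_mnorm_coc_iter_split[OF B] Lplus_split[OF B] by (simp add: add_divide_distrib)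
    ultimately show "x \<in> deviation_event (normalize_coc B) n t \<union> average_deviation"
      unfolding deviation_event_def average_deviation_def by auto
  qed
  have "O.prob {x \<in> space \<Omega>. t \<le> \<bar>(\<Sum>k<n. log_scale B (shift (k * 1 + 0) x 0)) / real n
      - O.expectation (\<lambda>x. log_scale B (x 0))\<bar>} \<le> 2 * exp (- (real n * t\<^sup>2 / (2 * (H + 1)\<^sup>2)))"
    by (rule prob_shifted_block_average_deviation) (use n t H in auto)
  then have hoeffding: "O.prob average_deviation \<le> 2 * exp (- (real n * t\<^sup>2 / (2 * (H + 1)\<^sup>2)))"
    by (simp add: average_deviation_def expectation_coordinate mean_log_scale_def)
  have "O.prob (deviation_event B n (2 * t))
      \<le> O.prob (deviation_event (normalize_coc B) n t \<union> average_deviation)"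
    using split deviation_event_in_sets average_deviation by (intro O.finite_measure_mono) auto
  also have "\<dots> \<le> O.prob (deviation_event (normalize_coc B) n t) + O.prob average_deviation"
    by (rule measure_Un_le[OF deviation_event_in_sets average_deviation])
  finally show ?thesis
    using hoeffding by linarith
qed

lemma prob_deviation_event_exp_bound:
  assumes B: "B \<in> GL2" and n: "0 < n" and H: "\<And>j. \<bar>log_scale B j\<bar> \<le> H" and \<epsilon>: "0 < \<epsilon>"
    and c: "2 * c \<le> cs / 4" "2 * c \<le> 1 / (8 * (H + 1)\<^sup>2)" and large: "ln 3 < c * (\<epsilon>\<^sup>2 * real n)"
    and normalized: "O.prob (deviation_event (normalize_coc B) n (\<epsilon> / 2)) < exp (- cs * (\<epsilon> / 2)\<^sup>2 * real n)"
  shows "O.prob (deviation_event B n \<epsilon>) < exp (- c * \<epsilon>\<^sup>2 * real n)"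
proof -
  define X where "X = \<epsilon>\<^sup>2 * real n"
  have "X \<ge> 0"
    by (simp add: X_def)
  have "2 * c * X \<le> cs / 4 * X"
    using mult_right_mono[OF c(1) \<open>X \<ge> 0\<close>] .
  also have "cs / 4 * X = cs * (\<epsilon> / 2)\<^sup>2 * real n"
    by (simp add: X_def power_divide algebra_simps)
  finally have "exp (- cs * (\<epsilon> / 2)\<^sup>2 * real n) \<le> exp (- (2 * c * X))"
    by simp
  with normalized have P1: "O.prob (deviation_event (normalize_coc B) n (\<epsilon> / 2)) < exp (- (2 * c * X))"
    by (rule order.strict_trans2)
  have "real n * (\<epsilon> / 2)\<^sup>2 / (2 * (H + 1)\<^sup>2) = 1 / (8 * (H + 1)\<^sup>2) * X"
    by (simp add: X_def power_divide field_simps)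
  then have P2: "2 * exp (- (real n * (\<epsilon> / 2)\<^sup>2 / (2 * (H + 1)\<^sup>2))) \<le> 2 * exp (- (2 * c * X))"
    using mult_right_mono[OF c(2) \<open>X \<ge> 0\<close>] by simp
  have "O.prob (deviation_event B n (2 * (\<epsilon> / 2)))
      \<le> O.prob (deviation_event (normalize_coc B) n (\<epsilon> / 2))
        + 2 * exp (- (real n * (\<epsilon> / 2)\<^sup>2 / (2 * (H + 1)\<^sup>2)))"
    using B n H \<epsilon> by (intro prob_deviation_event_le) auto
  also have "\<dots> < exp (- (c * X))"
    using large P1 P2 by (intro three_exp_le) (auto simp: X_def)
  finally show ?thesis
    by (simp add: X_def mult.assoc)
qed

lemma uniform_exp_LDT_transfer:
  assumes A: "A \<in> GL2" and hyp: "uniform_exp_LDT p SL2 (normalize_coc A)"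
  shows "uniform_exp_LDT p GL2 A"
proof -
  obtain \<delta>' cs \<epsilon>0 where "\<delta>' > 0" "cs > 0" "\<epsilon>0 > 0"
    and LDT: "\<And>\<epsilon>. 0 < \<epsilon> \<and> \<epsilon> < \<epsilon>0 \<Longrightarrow> \<exists>nbar. \<forall>B\<in>SL2. coc_dist B (normalize_coc A) < \<delta>' \<longrightarrow>
      (\<forall>n\<ge>nbar. O.prob (deviation_event B n \<epsilon>) < exp (- cs * \<epsilon>\<^sup>2 * real n))"
    using hyp unfolding uniform_exp_LDT_def deviation_event_def by blast
  obtain \<delta> H where "\<delta> > 0" "H \<ge> 0"
    and near: "\<And>B. coc_dist B A < \<delta> \<Longrightarrow> B \<in> GL2 \<and> normalize_coc B \<in> SL2
      \<and> coc_dist (normalize_coc B) (normalize_coc A) < \<delta>' \<and> (\<forall>j. \<bar>log_scale B j\<bar> \<le> H)"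
    using normalized_near_GL2[OF A \<open>\<delta>' > 0\<close>] by blast
  define c where "c = min (cs / 4) (1 / (8 * (H + 1)\<^sup>2)) / 2"
  have c: "c > 0" "2 * c \<le> cs / 4" "2 * c \<le> 1 / (8 * (H + 1)\<^sup>2)"
    using \<open>cs > 0\<close> \<open>H \<ge> 0\<close> by (auto simp: c_def)
  have "\<exists>nbar. \<forall>B\<in>GL2. coc_dist B A < \<delta> \<longrightarrow>
      (\<forall>n\<ge>nbar. O.prob (deviation_event B n \<epsilon>) < exp (- c * \<epsilon>\<^sup>2 * real n))"
    if \<epsilon>: "0 < \<epsilon> \<and> \<epsilon> < \<epsilon>0" for \<epsilon>
  proof -
    have "0 < \<epsilon> / 2 \<and> \<epsilon> / 2 < \<epsilon>0"
      using \<epsilon> by auto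
    then obtain nbar where nbar: "\<forall>B\<in>SL2. coc_dist B (normalize_coc A) < \<delta>' \<longrightarrow>
        (\<forall>n\<ge>nbar. O.prob (deviation_event B n (\<epsilon> / 2)) < exp (- cs * (\<epsilon> / 2)\<^sup>2 * real n))"
      using LDT by blast
    have "eventually (\<lambda>n. ln 3 < (c * \<epsilon>\<^sup>2) * real n) sequentially"
      using c(1) \<epsilon> by real_asymp
    then obtain N where N: "\<And>n. n \<ge> N \<Longrightarrow> ln 3 < c * (\<epsilon>\<^sup>2 * real n)"
      by (auto simp: eventually_sequentially mult.assoc)
    show ?thesis
    proof (intro exI[of _ "max (max nbar N) 1"] ballI impI allI)
      fix B n assume B: "B \<in> GL2" "coc_dist B A < \<delta>" and n: "max (max nbar N) 1 \<le> n"
      have B': "normalize_coc B \<in> SL2" "coc_dist (normalize_coc B) (normalize_coc A) < \<delta>'"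
        "\<And>j. \<bar>log_scale B j\<bar> \<le> H"
        using near[OF B(2)] by auto
      have "nbar \<le> n" "N \<le> n" "0 < n"
        using n by auto
      show "O.prob (deviation_event B n \<epsilon>) < exp (- c * \<epsilon>\<^sup>2 * real n)"
      proof (rule prob_deviation_event_exp_bound[OF B(1) \<open>0 < n\<close> B'(3) _ c(2,3)])
        show "ln 3 < c * (\<epsilon>\<^sup>2 * real n)"
          by (rule N[OF \<open>N \<le> n\<close>])
        show "O.prob (deviation_event (normalize_coc B) n (\<epsilon> / 2)) < exp (- cs * (\<epsilon> / 2)\<^sup>2 * real n)"
          using nbar B'(1,2) \<open>nbar \<le> n\<close> by blast
      qed (use \<epsilon> in simp)
    qed
  qed
  then show ?thesis
    unfolding uniform_exp_LDT_def deviation_event_def[symmetric]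
    using \<open>\<delta> > 0\<close> c(1) \<open>\<epsilon>0 > 0\<close> by blast
qed

lemma prob_deviation_event_subexp_bound:
  assumes B: "B \<in> GL2" and n: "0 < n" and H: "\<And>j. \<bar>log_scale B j\<bar> \<le> H"
    and rates: "real n powr - a' \<le> real n powr - a / 2"
      "exp (- (real n powr b')) \<le> exp (- (real n powr b)) / 2"
      "2 * exp (- (1 / (2 * (H + 1)\<^sup>2) * real n * (real n powr - a / 2)\<^sup>2)) \<le> exp (- (real n powr b)) / 2"
    and normalized: "O.prob (deviation_event (normalize_coc B) n (real n powr - a')) < exp (- (real n powr b'))"
  shows "O.prob (deviation_event B n (real n powr - a)) < exp (- (real n powr b))"
proof -
  define t where "t = real n powr - a / 2"
  have "O.prob (deviation_event (normalize_coc B) n t)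
      \<le> O.prob (deviation_event (normalize_coc B) n (real n powr - a'))"
    using rates(1) unfolding t_def by (rule prob_deviation_event_antimono)
  also have "\<dots> < exp (- (real n powr b)) / 2"
    using normalized rates(2) by linarith
  finally have P1: "O.prob (deviation_event (normalize_coc B) n t) < exp (- (real n powr b)) / 2" .
  have "real n * t\<^sup>2 / (2 * (H + 1)\<^sup>2) = 1 / (2 * (H + 1)\<^sup>2) * real n * t\<^sup>2"
    by simp
  then have P2: "2 * exp (- (real n * t\<^sup>2 / (2 * (H + 1)\<^sup>2))) \<le> exp (- (real n powr b)) / 2"
    using rates(3) by (simp add: t_def)
  have "O.prob (deviation_event B n (2 * t))
      \<le> O.prob (deviation_event (normalize_coc B) n t) + 2 * exp (- (real n * t\<^sup>2 / (2 * (H + 1)\<^sup>2)))"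
    using B n H by (intro prob_deviation_event_le) (auto simp: t_def)
  then show ?thesis
    using P1 P2 by (simp add: t_def)
qed

lemma uniform_subexp_LDT_transfer:
  assumes A: "A \<in> GL2" and hyp: "uniform_subexp_LDT p SL2 (normalize_coc A)"
  shows "uniform_subexp_LDT p GL2 A"
proof -
  obtain \<delta>' nbar a' b' where "\<delta>' > 0" "a' > 0" "b' > 0"
    and LDT: "\<forall>B\<in>SL2. coc_dist B (normalize_coc A) < \<delta>' \<longrightarrow> (\<forall>n\<ge>nbar.
      O.prob (deviation_event B n (real n powr - a')) < exp (- (real n powr b')))"
    using hyp unfolding uniform_subexp_LDT_def deviation_event_def by blast
  obtain \<delta> H where "\<delta> > 0" "H \<ge> 0"
    and near: "\<And>B. coc_dist B A < \<delta> \<Longrightarrow> B \<in> GL2 \<and> normalize_coc B \<in> SL2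
      \<and> coc_dist (normalize_coc B) (normalize_coc A) < \<delta>' \<and> (\<forall>j. \<bar>log_scale B j\<bar> \<le> H)"
    using normalized_near_GL2[OF A \<open>\<delta>' > 0\<close>] by blast
  define a b where "a = min (a' / 2) (1 / 4)" and "b = min (b' / 2) (1 / 4)"
  have rates: "0 < a" "a < a'" "0 < b" "b < b'" "2 * a + b < 1" "0 < 1 / (2 * (H + 1)\<^sup>2)"
    using \<open>a' > 0\<close> \<open>b' > 0\<close> \<open>H \<ge> 0\<close> by (auto simp: a_def b_def)
  obtain N where N: "\<And>n. n \<ge> N \<Longrightarrow> real n powr - a' \<le> real n powr - a / 2
      \<and> exp (- (real n powr b')) \<le> exp (- (real n powr b)) / 2
      \<and> 2 * exp (- (1 / (2 * (H + 1)\<^sup>2) * real n * (real n powr - a / 2)\<^sup>2))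
        \<le> exp (- (real n powr b)) / 2"
    using eventually_subexp_rates[OF rates] unfolding eventually_sequentially by blast
  have bound: "O.prob (deviation_event B n (real n powr - a)) < exp (- (real n powr b))"
    if "coc_dist B A < \<delta>" "n \<ge> max (max nbar N) 1" for B n
  proof -
    have B: "B \<in> GL2" "normalize_coc B \<in> SL2" "coc_dist (normalize_coc B) (normalize_coc A) < \<delta>'"
      "\<And>j. \<bar>log_scale B j\<bar> \<le> H"
      using near[OF that(1)] by auto
    have "nbar \<le> n" "N \<le> n" "0 < n"
      using that(2) by auto
    show ?thesis
    proof (rule prob_deviation_event_subexp_bound[OF B(1) \<open>0 < n\<close> B(4)])
      show "O.prob (deviation_event (normalize_coc B) n (real n powr - a')) < exp (- (real n powr b'))"
        using LDT B(2,3) \<open>nbar \<le> n\<close> by blast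
    qed (use N[OF \<open>N \<le> n\<close>] in auto)
  qed
  show ?thesis
    unfolding uniform_subexp_LDT_def deviation_event_def[symmetric]
    using \<open>\<delta> > 0\<close> rates(1,3) bound by blast
qed

lemma abs_mean_log_scale_diff_le:
  assumes "\<And>j. \<bar>log_scale B1 j - log_scale B2 j\<bar> \<le> K"
  shows "\<bar>mean_log_scale p B1 - mean_log_scale p B2\<bar> \<le> K"
proof -
  have "\<bar>mean_log_scale p B1 - mean_log_scale p B2\<bar>
      = \<bar>\<Sum>j\<in>UNIV. (log_scale B1 j - log_scale B2 j) * pmf p j\<bar>"
    by (simp add: mean_log_scale_def integral_measure_pmf_real[of UNIV] sum_subtractf left_diff_distrib)
  also have "\<dots> \<le> (\<Sum>j\<in>UNIV. K * pmf p j)"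
    using assms by (intro order_trans[OF sum_abs sum_mono]) (simp add: abs_mult mult_right_mono)
  also have "\<dots> = K"
    by (simp add: sum_distrib_left[symmetric] sum_pmf_eq_1)
  finally show ?thesis .
qed

lemma abs_Lplus_diff_le_modulus:
  assumes B: "B1 \<in> GL2" "B2 \<in> GL2"
    and normalized: "\<bar>Lplus p (normalize_coc B1) - Lplus p (normalize_coc B2)\<bar>
      \<le> C' * \<omega> (C' * coc_dist (normalize_coc B1) (normalize_coc B2))"
    and lip_normalize: "coc_dist (normalize_coc B1) (normalize_coc B2) \<le> L * coc_dist B1 B2"
    and lip_scale: "\<And>j. \<bar>log_scale B1 j - log_scale B2 j\<bar> \<le> L * coc_dist B1 B2"
    and mono: "mono_on {0..} \<omega>" and lower: "c * (C * coc_dist B1 B2) \<le> \<omega> (C * coc_dist B1 B2)"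
    and C: "0 < C'" "0 < c" "0 < C" "C' + 1 \<le> C" "C' * L \<le> C" "L \<le> c * C"
  shows "\<bar>Lplus p B1 - Lplus p B2\<bar> \<le> C * \<omega> (C * coc_dist B1 B2)"
proof -
  define d where "d = coc_dist B1 B2"
  have "0 \<le> d"
    by (simp add: d_def coc_dist_nonneg)
  then have "0 \<le> C * d"
    using C(3) by simp
  then have "0 \<le> \<omega> (C * d)"
    using lower C(2) unfolding d_def[symmetric] by (meson mult_nonneg_nonneg less_imp_le order_trans)
  have "C' * coc_dist (normalize_coc B1) (normalize_coc B2) \<le> C' * (L * d)"
    using lip_normalize C(1) by (simp add: d_def)
  also have "\<dots> \<le> C * d"
    using mult_right_mono[OF C(5) \<open>0 \<le> d\<close>] by (simp add: mult.assoc)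
  finally have "\<omega> (C' * coc_dist (normalize_coc B1) (normalize_coc B2)) \<le> \<omega> (C * d)"
    using C(1) \<open>0 \<le> C * d\<close> by (intro mono_onD[OF mono]) (auto simp: coc_dist_nonneg)
  then have part1: "\<bar>Lplus p (normalize_coc B1) - Lplus p (normalize_coc B2)\<bar> \<le> C' * \<omega> (C * d)"
    using normalized mult_left_mono[of _ _ C'] C(1) by (meson less_imp_le order_trans)
  have "\<bar>mean_log_scale p B1 - mean_log_scale p B2\<bar> \<le> L * d"
    using lip_scale by (intro abs_mean_log_scale_diff_le) (simp add: d_def)
  also have "\<dots> \<le> c * (C * d)"
    using mult_right_mono[OF C(6) \<open>0 \<le> d\<close>] by (simp add: mult.assoc)
  also have "\<dots> \<le> \<omega> (C * d)"
    using lower by (simp add: d_def)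
  finally have part2: "\<bar>mean_log_scale p B1 - mean_log_scale p B2\<bar> \<le> \<omega> (C * d)" .
  have "\<bar>Lplus p B1 - Lplus p B2\<bar> \<le> (C' + 1) * \<omega> (C * d)"
    using part1 part2 Lplus_split[OF B(1)] Lplus_split[OF B(2)] by (simp add: algebra_simps)
  also have "\<dots> \<le> C * \<omega> (C * d)"
    using mult_right_mono[OF C(4) \<open>0 \<le> \<omega> (C * d)\<close>] .
  finally show ?thesis
    by (simp add: d_def)
qed

lemma modulus_transfer:
  assumes A: "A \<in> GL2" and admissible: "admissible_modulus \<omega>"
    and hyp: "has_modulus_near (Lplus p) SL2 \<omega> (normalize_coc A)"
  shows "has_modulus_near (Lplus p) GL2 \<omega> A"
proof -
  obtain \<delta>' C' where "\<delta>' > 0" "C' > 0"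
    and modulus: "\<forall>B1\<in>SL2. \<forall>B2\<in>SL2. coc_dist B1 (normalize_coc A) < \<delta>' \<longrightarrow>
      coc_dist B2 (normalize_coc A) < \<delta>' \<longrightarrow>
      \<bar>Lplus p B1 - Lplus p B2\<bar> \<le> C' * \<omega> (C' * coc_dist B1 B2)"
    using hyp unfolding has_modulus_near_def by blast
  obtain c t0 where mono: "mono_on {0..} \<omega>" and "c > 0" "t0 > 0"
    and lower: "\<forall>t. 0 \<le> t \<and> t \<le> t0 \<longrightarrow> c * t \<le> \<omega> t"
    using admissible unfolding admissible_modulus_def by blast
  obtain \<delta>1 H where "\<delta>1 > 0" "H \<ge> 0"
    and near: "\<And>B. coc_dist B A < \<delta>1 \<Longrightarrow> B \<in> GL2 \<and> normalize_coc B \<in> SL2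
      \<and> coc_dist (normalize_coc B) (normalize_coc A) < \<delta>' \<and> (\<forall>j. \<bar>log_scale B j\<bar> \<le> H)"
    using normalized_near_GL2[OF A \<open>\<delta>' > 0\<close>] by blast
  obtain \<delta>2 L H' where "\<delta>2 > 0" "L \<ge> 0"
    and "\<And>B. coc_dist B A < \<delta>2 \<Longrightarrow> B \<in> GL2"
    and "\<And>B j. coc_dist B A < \<delta>2 \<Longrightarrow> \<bar>log_scale B j\<bar> \<le> H'"
    and lip_scale: "\<And>B1 B2 j. coc_dist B1 A < \<delta>2 \<Longrightarrow> coc_dist B2 A < \<delta>2 \<Longrightarrow>
      \<bar>log_scale B1 j - log_scale B2 j\<bar> \<le> L * coc_dist B1 B2"
    and lip_normalize: "\<And>B1 B2. coc_dist B1 A < \<delta>2 \<Longrightarrow> coc_dist B2 A < \<delta>2 \<Longrightarrow>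
      coc_dist (normalize_coc B1) (normalize_coc B2) \<le> L * coc_dist B1 B2"
    using local_estimates_near_GL2[OF A] by blast
  define C where "C = C' + 1 + C' * L + L / c"
  have "0 \<le> C' * L" "0 \<le> L / c"
    using \<open>C' > 0\<close> \<open>L \<ge> 0\<close> \<open>c > 0\<close> by simp_all
  then have C: "0 < C" "C' + 1 \<le> C" "C' * L \<le> C" "L / c \<le> C"
    using \<open>C' > 0\<close> by (simp_all add: C_def)
  have "L \<le> c * C"
    using mult_left_mono[OF C(4), of c] \<open>c > 0\<close> by simp
  define \<delta> where "\<delta> = min (min \<delta>1 \<delta>2) (t0 / (2 * C))"
  have "\<delta> > 0"
    using \<open>\<delta>1 > 0\<close> \<open>\<delta>2 > 0\<close> \<open>t0 > 0\<close> C(1) by (simp add: \<delta>_def)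
  have "\<bar>Lplus p B1 - Lplus p B2\<bar> \<le> C * \<omega> (C * coc_dist B1 B2)"
    if B: "coc_dist B1 A < \<delta>" "coc_dist B2 A < \<delta>" for B1 B2
  proof (rule abs_Lplus_diff_le_modulus[OF _ _ _ _ _ mono _ \<open>C' > 0\<close> \<open>c > 0\<close> C(1,2,3) \<open>L \<le> c * C\<close>])
    have "coc_dist B1 B2 < 2 * \<delta>"
      using coc_dist_triangle[of B1 B2 A] B by linarith
    also have "2 * \<delta> \<le> t0 / C"
      using C(1) by (simp add: \<delta>_def)
    finally have "C * coc_dist B1 B2 \<le> t0"
      using C(1) by (simp add: less_divide_eq mult.commute)
    then show "c * (C * coc_dist B1 B2) \<le> \<omega> (C * coc_dist B1 B2)"
      using lower C(1) coc_dist_nonneg[of B1 B2] by simp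
    show "\<bar>Lplus p (normalize_coc B1) - Lplus p (normalize_coc B2)\<bar>
        \<le> C' * \<omega> (C' * coc_dist (normalize_coc B1) (normalize_coc B2))"
      using modulus near B by (auto simp: \<delta>_def)
  qed (use near lip_scale lip_normalize B in \<open>auto simp: \<delta>_def\<close>)
  then show ?thesis
    unfolding has_modulus_near_def using \<open>\<delta> > 0\<close> C(1) by blast
qed

end

theorem proposition2p1:
  fixes p :: "'a::finite pmf" and A :: "'a \<Rightarrow> mat2" and \<omega> :: "real \<Rightarrow> real"
  assumes "set_pmf p = UNIV"
    and "A \<in> GL2"
  shows "(uniform_exp_LDT p SL2 (normalize_coc A) \<longrightarrow> uniform_exp_LDT p GL2 A)
       \<and> (uniform_subexp_LDT p SL2 (normalize_coc A) \<longrightarrow> uniform_subexp_LDT p GL2 A)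
       \<and> (admissible_modulus \<omega> \<longrightarrow> has_modulus_near (Lplus p) SL2 \<omega> (normalize_coc A)
            \<longrightarrow> has_modulus_near (Lplus p) GL2 \<omega> A)"
proof -
  interpret bernoulli_shift p .
  show ?thesis
    using uniform_exp_LDT_transfer uniform_subexp_LDT_transfer modulus_transfer assms(2) by blast
qed

end
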